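(* Let $u$ be a smooth solution of the problem below on $[0,T)$ with smooth initial data $u_0$, under either periodic or Dirichlet boundary conditions, and let $\eta$ be the solution of $\dot\eta(t)=\bar{\mathcal K}_0(t)^{-2}$, $\eta(0)=0$. Then for all $t\in[0,T)$ and $\alpha\in[0,1]$, $$u_{xx}(\gamma(\alpha,t),t)=u_0''(\alpha)\,\gamma_\alpha(\alpha,t)=\frac{u_0''(\alpha)}{\mathcal J(\alpha,t)}\left(\int_0^1\frac{d\beta}{\mathcal J(\beta,t)}\right)^{-1},$$ and $$u_{xxx}(\gamma(\alpha,t),t)=u_0'''(\alpha)+\eta(t)\,\frac{u_0''(\alpha)^2}{\mathcal J(\alpha,t)}.$$ In particular, as long as the solution exists, the sign of $u_{xx}$ along each Lagrangian trajectory equals the sign of $u_0''(\alpha)$ (the initial concavity profile is preserved).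
   Context: The problem: $u_{xt}+u u_{xx}-u_x^2=-2\int_0^1 u_x^2\,dx$ for $t>0$, $x\in[0,1]$, $u(x,0)=u_0(x)$, with either periodic boundary conditions $u(0,t)=u(1,t)$, $u_x(0,t)=u_x(1,t)$ or Dirichlet boundary conditions $u(0,t)=u(1,t)=0$. The Lagrangian flow $\gamma(\alpha,t)$ is defined by $\dot\gamma(\alpha,t)=u(\gamma(\alpha,t),t)$, $\gamma(\alpha,0)=\alpha$, and $\gamma_\alpha=\partial\gamma/\partial\alpha$. Given $\eta(t)$, define $\mathcal J(\alpha,t)=1-\eta(t)u_0'(\alpha)$ and $\bar{\mathcal K}_0(t)=\int_0^1\mathcal J(\alpha,t)^{-1}\,d\alpha$. *)

theory Defs
  imports "HOL-Analysis.Analysis"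
begin

text \<open>A family D of functions of (x,t) is a C-infinity family on S when D i j is the
  partial derivative of order i in x and order j in t of D 0 0:
  each D i j is continuous on S and differentiable within S with x-derivative
  D (i+1) j and t-derivative D i (j+1).\<close>
definition smooth_family :: "(real \<times> real) set \<Rightarrow> (nat \<Rightarrow> nat \<Rightarrow> real \<Rightarrow> real \<Rightarrow> real) \<Rightarrow> bool" where
  "smooth_family S D \<longleftrightarrow>
     (\<forall>i j. continuous_on S (\<lambda>p. D i j (fst p) (snd p)) \<and>
        (\<forall>p\<in>S. ((\<lambda>q. D i j (fst q) (snd q)) has_derivative
                  (\<lambda>h. D (Suc i) j (fst p) (snd p) * fst h + D i (Suc j) (fst p) (snd p) * snd h))
                 (at p within S)))"

definition JJ :: "(real \<Rightarrow> real) \<Rightarrow> (real \<Rightarrow> real) \<Rightarrow> real \<Rightarrow> real \<Rightarrow> real" where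
  "JJ \<eta> u0' \<alpha> t = 1 - \<eta> t * u0' \<alpha>"

definition Kbar0 :: "(real \<Rightarrow> real) \<Rightarrow> (real \<Rightarrow> real) \<Rightarrow> real \<Rightarrow> real" where
  "Kbar0 \<eta> u0' t = integral {0..1} (\<lambda>\<alpha>. 1 / JJ \<eta> u0' \<alpha> t)"

end

theory Submission
  imports Defs
begin

text \<open>Along the trajectory issued from \<open>\<alpha>\<close>, the equation turns \<open>u\<^sub>x\<close> into a solution of the
  Riccati equation \<open>(u\<^sub>x)' = u\<^sub>x\<^sup>2 - 2I(t)\<close> with \<open>I(t) = \<integral>u\<^sub>x\<^sup>2\<close>, and a Gronwall estimate shows that
  \<open>\<gamma>\<^sub>\<alpha> = exp \<integral>u\<^sub>x\<close>. Hence \<open>v = 1/\<gamma>\<^sub>\<alpha>\<close> solves \<open>v'' = 2I(t) v\<close> with \<open>v(0) = 1\<close>, \<open>v'(0) = -u\<^sub>0'(\<alpha>)\<close>: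
  the equation does not depend on \<open>\<alpha>\<close> and the data are affine in \<open>u\<^sub>0'(\<alpha>)\<close>, so
  \<open>v(\<alpha>,t) = \<phi>\<^sub>1(t) - \<phi>\<^sub>2(t) u\<^sub>0'(\<alpha>)\<close> for two solutions with Wronskian 1.
  The boundary conditions force \<open>\<integral>\<gamma>\<^sub>\<alpha> = 1\<close>, i.e. \<open>\<integral>1/v = 1\<close>. For \<open>\<eta> = \<phi>\<^sub>2/\<phi>\<^sub>1\<close> this says
  \<open>v = JJ \<cdot> Kbar0\<close> with \<open>Kbar0 = \<phi>\<^sub>1\<close>, and the Wronskian identity becomes \<open>\<eta>' = Kbar0\<^sup>-\<^sup>2\<close>; so by
  uniqueness this is the \<open>\<eta>\<close> of the theorem. Differentiating \<open>u\<^sub>x(\<gamma>(\<alpha>,t),t) = -v'/v\<close> in \<open>\<alpha>\<close> gives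
  \<open>u\<^sub>x\<^sub>x(\<gamma>(\<alpha>,t),t) = u\<^sub>0''(\<alpha>)/v\<close>, and differentiating once more gives \<open>u\<^sub>x\<^sub>x\<^sub>x\<close>.\<close>

lemma at_within_Icc_nontrivial:
  fixes a b x :: real
  assumes "a < b" "x \<in> {a..b}"
  shows "at x within {a..b} \<noteq> bot"
  using assms by (simp add: trivial_limit_within islimpt_Icc)

lemma at_within_Ico_nontrivial:
  fixes a b x :: real
  assumes "x \<in> {a..<b}"
  shows "at x within {a..<b} \<noteq> bot"
  using assms by (simp add: trivial_limit_within)

lemma at_within_Icc_eq_Ico:
  fixes s b T :: real
  assumes "0 \<le> s" "s < b" "s < T"
  shows "at s within {0..b} = at s within {0..<T}"
  by (rule at_within_nhd[where S="{s - 1 <..< min b T}"]) (use assms in auto)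

lemma has_real_derivative_at_of_within_Ico:
  assumes "(f has_real_derivative f') (at s within {0..<T})" "0 < s" "s < T"
  shows "(f has_real_derivative f') (at s)"
proof -
  have "at s within {0..<T} = at s" by (rule at_within_interior) (use assms in auto)
  thus ?thesis using assms(1) by simp
qed

lemma has_real_derivative_continuous_on:
  assumes "\<And>x. x \<in> S \<Longrightarrow> (f has_real_derivative f' x) (at x within S)"
  shows "continuous_on S f"
  by (rule has_derivative_continuous_on) (use assms in \<open>auto simp: has_field_derivative_def\<close>)

lemma mult_le_sq_if_abs_le:
  fixes p q M :: real
  assumes "\<bar>q\<bar> \<le> M * \<bar>p\<bar>"
  shows "p * q \<le> M * p\<^sup>2"
proof -
  have "p * q \<le> \<bar>p\<bar> * \<bar>q\<bar>" by (metis abs_ge_self abs_mult)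
  also have "\<dots> \<le> \<bar>p\<bar> * (M * \<bar>p\<bar>)" by (rule mult_left_mono[OF assms]) simp
  also have "\<dots> = M * p\<^sup>2" by (simp add: power2_eq_square abs_mult_self_eq algebra_simps)
  finally show ?thesis .
qed

lemma two_mul_le_sq_bound:
  fixes e R u M Q :: real
  assumes "\<bar>u\<bar> \<le> M" "R\<^sup>2 \<le> Q"
  shows "2 * e * (R + u * e) \<le> (2 * M + 1) * e\<^sup>2 + Q"
proof -
  have "2 * e * R \<le> e\<^sup>2 + R\<^sup>2" using sum_squares_bound[of e R] by (simp add: power2_eq_square)
  moreover have "u * e\<^sup>2 \<le> M * e\<^sup>2" using assms(1) by (intro mult_right_mono) auto
  ultimately show ?thesis using assms(2) by (simp add: power2_eq_square algebra_simps)
qed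

lemma has_real_derivative_if_quadratic_remainder:
  fixes f :: "real \<Rightarrow> real"
  assumes rem: "\<And>x. x \<in> S \<Longrightarrow> \<bar>f x - f a - (x - a) * d\<bar> \<le> C * (x - a)\<^sup>2"
  shows "(f has_real_derivative d) (at a within S)"
proof -
  have "((\<lambda>x. (f x - f a) / (x - a) - d) \<longlongrightarrow> 0) (at a within S)"
  proof (rule Lim_null_comparison)
    have "\<bar>(f x - f a) / (x - a) - d\<bar> \<le> C * \<bar>x - a\<bar>" if "x \<in> S" "x \<noteq> a" for x
    proof -
      have "(f x - f a) / (x - a) - d = (f x - f a - (x - a) * d) / (x - a)"
        using that by (simp add: field_simps)
      hence "\<bar>(f x - f a) / (x - a) - d\<bar> * \<bar>x - a\<bar> = \<bar>f x - f a - (x - a) * d\<bar>"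
        using that by (simp add: abs_divide)
      also have "\<dots> \<le> C * \<bar>x - a\<bar> * \<bar>x - a\<bar>"
        using rem[OF that(1)] by (simp add: power2_eq_square abs_mult_self_eq mult.assoc)
      finally show ?thesis using that by simp
    qed
    thus "\<forall>\<^sub>F x in at a within S. norm ((f x - f a) / (x - a) - d) \<le> C * \<bar>x - a\<bar>"
      by (auto simp: eventually_at_filter)
    have "((\<lambda>x. C * \<bar>x - a\<bar>) \<longlongrightarrow> C * \<bar>a - a\<bar>) (at a within S)"
      by (intro tendsto_intros)
    thus "((\<lambda>x. C * \<bar>x - a\<bar>) \<longlongrightarrow> 0) (at a within S)" by simp
  qed
  hence "((\<lambda>x. (f x - f a) / (x - a)) \<longlongrightarrow> d) (at a within S)" by (rule LIM_zero_cancel)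
  thus ?thesis by (simp add: has_field_derivative_iff)
qed

lemma gronwall_affine:
  fixes E E' :: "real \<Rightarrow> real"
  assumes "0 \<le> b" "0 \<le> A" "0 \<le> B" "continuous_on {0..b} E"
    and d: "\<And>s. 0 < s \<Longrightarrow> s < b \<Longrightarrow> (E has_real_derivative E' s) (at s)"
    and le: "\<And>s. 0 < s \<Longrightarrow> s < b \<Longrightarrow> E' s \<le> A * E s + B"
  shows "E b \<le> exp (A * b) * (E 0 + B * b)"
proof -
  define \<psi> where "\<psi> s = exp (- A * s) * E s - B * s" for s
  have "\<psi> b \<le> \<psi> 0"
  proof (rule DERIV_nonpos_imp_decreasing_open[OF \<open>0 \<le> b\<close>])
    fix s assume s: "0 < s" "s < b"
    have "(\<psi> has_real_derivative (- A * exp (- A * s) * E s + exp (- A * s) * E' s - B)) (at s)"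
      unfolding \<psi>_def by (auto intro!: derivative_eq_intros d s)
    moreover have "- A * exp (- A * s) * E s + exp (- A * s) * E' s - B \<le> 0"
    proof -
      have "exp (- A * s) * E' s \<le> exp (- A * s) * (A * E s + B)" using le[OF s] by simp
      moreover have "exp (- A * s) \<le> 1" using \<open>0 \<le> A\<close> s by simp
      hence "exp (- A * s) * B \<le> B" using \<open>0 \<le> B\<close> by (simp add: mult_left_le_one_le)
      ultimately show ?thesis by (simp add: algebra_simps)
    qed
    ultimately show "\<exists>y. (\<psi> has_real_derivative y) (at s) \<and> y \<le> 0" by blast
  next
    show "continuous_on {0..b} \<psi>" unfolding \<psi>_def
      by (intro continuous_intros assms(4))
  qed
  hence "exp (- A * b) * E b \<le> E 0 + B * b" by (simp add: \<psi>_def)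
  hence "exp (A * b) * (exp (- A * b) * E b) \<le> exp (A * b) * (E 0 + B * b)" by simp
  thus ?thesis by (simp add: exp_minus field_simps)
qed

lemma second_order_linear_ode_unique:
  fixes g G q :: "real \<Rightarrow> real"
  assumes s: "0 \<le> s" and cg: "continuous_on {0..s} g" and cG: "continuous_on {0..s} G"
    and dg: "\<And>r. 0 < r \<Longrightarrow> r < s \<Longrightarrow> (g has_real_derivative G r) (at r)"
    and dG: "\<And>r. 0 < r \<Longrightarrow> r < s \<Longrightarrow> (G has_real_derivative q r * g r) (at r)"
    and q: "\<And>r. 0 < r \<Longrightarrow> r < s \<Longrightarrow> \<bar>q r\<bar> \<le> Q"
    and g0: "g 0 = 0" and G0: "G 0 = 0"
  shows "g s = 0"
proof -
  have "(g s)\<^sup>2 + (G s)\<^sup>2 \<le> exp ((1 + max Q 0) * s) * (((g 0)\<^sup>2 + (G 0)\<^sup>2) + 0 * s)"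
  proof (rule gronwall_affine[where E="\<lambda>r. (g r)\<^sup>2 + (G r)\<^sup>2"
        and E'="\<lambda>r. 2 * g r * G r + 2 * G r * (q r * g r)"])
    show "continuous_on {0..s} (\<lambda>r. (g r)\<^sup>2 + (G r)\<^sup>2)" by (intro continuous_intros cg cG)
    fix r assume r: "0 < r" "r < s"
    show "((\<lambda>r. (g r)\<^sup>2 + (G r)\<^sup>2) has_real_derivative 2 * g r * G r + 2 * G r * (q r * g r)) (at r)"
      using dg[OF r] dG[OF r] by (auto intro!: derivative_eq_intros)
    have "0 \<le> (g r - G r)\<^sup>2" "0 \<le> (g r + G r)\<^sup>2" by simp_all
    hence gG: "\<bar>2 * (g r * G r)\<bar> \<le> (g r)\<^sup>2 + (G r)\<^sup>2"
      unfolding abs_le_iff power2_diff power2_sum by linarith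
    have "2 * G r * (q r * g r) = q r * (2 * (g r * G r))" by (simp add: algebra_simps)
    also have "\<dots> \<le> \<bar>q r\<bar> * \<bar>2 * (g r * G r)\<bar>" by (metis abs_ge_self abs_mult)
    also have "\<dots> \<le> max Q 0 * ((g r)\<^sup>2 + (G r)\<^sup>2)"
      by (rule mult_mono) (use q[OF r] gG in auto)
    finally show "2 * g r * G r + 2 * G r * (q r * g r) \<le> (1 + max Q 0) * ((g r)\<^sup>2 + (G r)\<^sup>2) + 0"
      using gG by (simp add: algebra_simps)
  qed (use s in auto)
  hence "(g s)\<^sup>2 + (G s)\<^sup>2 \<le> 0" using g0 G0 by simp
  hence "(g s)\<^sup>2 \<le> 0" using zero_le_power2[of "G s"] by linarith
  thus ?thesis by simp
qed

lemma autonomous_ode_unique_lipschitz_along: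
  fixes f y z :: "real \<Rightarrow> real"
  assumes s: "0 \<le> s" and cy: "continuous_on {0..s} y" and cz: "continuous_on {0..s} z"
    and dy: "\<And>r. 0 < r \<Longrightarrow> r < s \<Longrightarrow> (y has_real_derivative f (y r)) (at r)"
    and dz: "\<And>r. 0 < r \<Longrightarrow> r < s \<Longrightarrow> (z has_real_derivative f (z r)) (at r)"
    and yz0: "y 0 = z 0" and L: "0 \<le> L"
    and lip: "\<And>r. 0 < r \<Longrightarrow> r < s \<Longrightarrow> \<bar>f (y r) - f (z r)\<bar> \<le> L * \<bar>y r - z r\<bar>"
  shows "y s = z s"
proof -
  have "(y s - z s)\<^sup>2 \<le> exp ((2 * L) * s) * ((y 0 - z 0)\<^sup>2 + 0 * s)"
  proof (rule gronwall_affine[where E="\<lambda>r. (y r - z r)\<^sup>2" and E'="\<lambda>r. 2 * (y r - z r) * (f (y r) - f (z r))"])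
    show "continuous_on {0..s} (\<lambda>r. (y r - z r)\<^sup>2)" by (intro continuous_intros cy cz)
    fix r assume r: "0 < r" "r < s"
    show "((\<lambda>r. (y r - z r)\<^sup>2) has_real_derivative 2 * (y r - z r) * (f (y r) - f (z r))) (at r)"
      using dy[OF r] dz[OF r] by (auto intro!: derivative_eq_intros)
    have "(y r - z r) * (f (y r) - f (z r)) \<le> L * (y r - z r)\<^sup>2"
      using lip[OF r] by (rule mult_le_sq_if_abs_le)
    thus "2 * (y r - z r) * (f (y r) - f (z r)) \<le> 2 * L * (y r - z r)\<^sup>2 + 0"
      unfolding mult.assoc by linarith
  qed (use s L in auto)
  thus ?thesis using yz0 by simp
qed

lemma autonomous_ode_unique_near_solution:
  fixes f y z :: "real \<Rightarrow> real"
  assumes t: "0 \<le> t" and cy: "continuous_on {0..t} y" and cz: "continuous_on {0..t} z"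
    and dy: "\<And>r. 0 < r \<Longrightarrow> r < t \<Longrightarrow> (y has_real_derivative f (y r)) (at r)"
    and dz: "\<And>r. 0 < r \<Longrightarrow> r < t \<Longrightarrow> (z has_real_derivative f (z r)) (at r)"
    and yz0: "y 0 = z 0" and \<delta>: "0 < \<delta>" and L: "0 \<le> L"
    and lip: "\<And>r e. r \<in> {0..t} \<Longrightarrow> \<bar>e - z r\<bar> \<le> \<delta> \<Longrightarrow> \<bar>f e - f (z r)\<bar> \<le> L * \<bar>e - z r\<bar>"
  shows "y t = z t"
proof -
  have agree: "y s = z s" if s: "s \<in> {0..t}" and near: "\<And>r. 0 \<le> r \<Longrightarrow> r < s \<Longrightarrow> \<bar>y r - z r\<bar> < \<delta>" for s
  proof (rule autonomous_ode_unique_lipschitz_along[where f=f and y=y and z=z and L=L])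
    show "continuous_on {0..s} y" "continuous_on {0..s} z"
      using continuous_on_subset[OF cy] continuous_on_subset[OF cz] s by auto
    fix r assume r: "0 < r" "r < s"
    show "(y has_real_derivative f (y r)) (at r)" "(z has_real_derivative f (z r)) (at r)"
      using dy[of r] dz[of r] r s by auto
    show "\<bar>f (y r) - f (z r)\<bar> \<le> L * \<bar>y r - z r\<bar>"
      using lip[of r "y r"] near[of r] r s by auto
  qed (use s yz0 L in auto)
  text \<open>The first time \<open>y\<close> leaves the \<open>\<delta>\<close>-tube around \<open>z\<close> would be a point where they agree.\<close>
  define Z where "Z = {s \<in> {0..t}. \<delta> \<le> \<bar>y s - z s\<bar>}"
  have "Z = {}"
  proof (rule ccontr)
    assume ne: "Z \<noteq> {}"
    have "Z = {0..t} \<inter> (\<lambda>s. \<bar>y s - z s\<bar>) -` {\<delta>..}" by (auto simp: Z_def)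
    also have "closed \<dots>" by (rule continuous_closed_preimage) (auto intro!: continuous_intros cy cz)
    finally have "closed Z" .
    moreover have bdd: "bdd_below Z" by (rule bdd_belowI[of _ 0]) (auto simp: Z_def)
    ultimately have first: "Inf Z \<in> Z" using closed_contains_Inf ne by blast
    have "y (Inf Z) = z (Inf Z)"
    proof (rule agree)
      show "Inf Z \<in> {0..t}" using first by (auto simp: Z_def)
      fix r assume r: "0 \<le> r" "r < Inf Z"
      hence "r \<notin> Z" using cInf_lower[OF _ bdd, of r] by auto
      thus "\<bar>y r - z r\<bar> < \<delta>" using r first by (auto simp: Z_def)
    qed
    thus False using first \<delta> by (auto simp: Z_def)
  qed
  show ?thesis
  proof (rule agree)
    fix r assume "0 \<le> r" "r < t"
    hence "r \<notin> Z" using \<open>Z = {}\<close> by blast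
    thus "\<bar>y r - z r\<bar> < \<delta>" using \<open>0 \<le> r\<close> \<open>r < t\<close> by (auto simp: Z_def)
  qed (use t in auto)
qed

lemma integral_reciprocal_bounds:
  fixes u :: "real \<Rightarrow> real"
  assumes cu: "continuous_on {0..1} u" and iu: "(u has_integral 0) {0..1}"
    and c: "0 < c" and J: "\<And>\<beta>. \<beta> \<in> {0..1} \<Longrightarrow> c \<le> 1 - e * u \<beta>"
  shows "continuous_on {0..1} (\<lambda>\<beta>. 1 / (1 - e * u \<beta>))"
    and "1 \<le> integral {0..1} (\<lambda>\<beta>. 1 / (1 - e * u \<beta>))"
    and "integral {0..1} (\<lambda>\<beta>. 1 / (1 - e * u \<beta>)) \<le> 1 / c"
proof -
  show cf: "continuous_on {0..1} (\<lambda>\<beta>. 1 / (1 - e * u \<beta>))"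
    by (intro continuous_intros cu) (use J c in force)
  have int: "(\<lambda>\<beta>. 1 / (1 - e * u \<beta>)) integrable_on {0..1}"
    by (rule integrable_continuous_real[OF cf])
  have "((\<lambda>\<beta>. 1 + e * u \<beta>) has_integral 1 + e * 0) {0..1}"
    by (intro has_integral_add has_integral_mult_right iu)
      (simp add: has_integral_const_real[of "1::real" 0 1, simplified])
  hence i1: "integral {0..1} (\<lambda>\<beta>. 1 + e * u \<beta>) = 1" "(\<lambda>\<beta>. 1 + e * u \<beta>) integrable_on {0..1}"
    by (auto simp: has_integral_iff)
  text \<open>Tangent line of \<open>1/(1 - x)\<close> at \<open>x = 0\<close>, integrated against \<open>\<integral>u = 0\<close>.\<close>
  have "integral {0..1} (\<lambda>\<beta>. 1 + e * u \<beta>) \<le> integral {0..1} (\<lambda>\<beta>. 1 / (1 - e * u \<beta>))"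
  proof (rule Henstock_Kurzweil_Integration.integral_le[OF i1(2) int])
    fix \<beta> :: real assume b: "\<beta> \<in> {0..1}"
    have p: "0 < 1 - e * u \<beta>" using J[OF b] c by linarith
    have "(1 + e * u \<beta>) * (1 - e * u \<beta>) = 1 - (e * u \<beta>)\<^sup>2" by (simp add: power2_eq_square algebra_simps)
    hence "(1 + e * u \<beta>) * (1 - e * u \<beta>) \<le> 1" using zero_le_power2[of "e * u \<beta>"] by linarith
    thus "1 + e * u \<beta> \<le> 1 / (1 - e * u \<beta>)" using p by (simp add: field_simps)
  qed
  thus "1 \<le> integral {0..1} (\<lambda>\<beta>. 1 / (1 - e * u \<beta>))" using i1 by simp
  have "integral {0..1} (\<lambda>\<beta>. 1 / (1 - e * u \<beta>)) \<le> integral {0..1} (\<lambda>\<beta>::real. 1 / c)"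
  proof (rule Henstock_Kurzweil_Integration.integral_le[OF int])
    fix \<beta> :: real assume b: "\<beta> \<in> {0..1}"
    show "1 / (1 - e * u \<beta>) \<le> 1 / c" using J[OF b] c by (intro divide_left_mono) auto
  qed (rule integrable_const_ivl)
  thus "integral {0..1} (\<lambda>\<beta>. 1 / (1 - e * u \<beta>)) \<le> 1 / c" by simp
qed

lemma integral_reciprocal_lipschitz:
  fixes u :: "real \<Rightarrow> real"
  assumes cu: "continuous_on {0..1} u" and iu: "(u has_integral 0) {0..1}"
    and M: "\<And>\<beta>. \<beta> \<in> {0..1} \<Longrightarrow> \<bar>u \<beta>\<bar> \<le> M"
    and c: "0 < c" and J1: "\<And>\<beta>. \<beta> \<in> {0..1} \<Longrightarrow> c \<le> 1 - e1 * u \<beta>"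
    and J2: "\<And>\<beta>. \<beta> \<in> {0..1} \<Longrightarrow> c \<le> 1 - e2 * u \<beta>"
  shows "\<bar>integral {0..1} (\<lambda>\<beta>. 1 / (1 - e1 * u \<beta>)) - integral {0..1} (\<lambda>\<beta>. 1 / (1 - e2 * u \<beta>))\<bar>
     \<le> M * \<bar>e1 - e2\<bar> / c\<^sup>2"
proof -
  note P1 = integral_reciprocal_bounds[OF cu iu c J1] and P2 = integral_reciprocal_bounds[OF cu iu c J2]
  have "integral {0..1} (\<lambda>\<beta>. 1 / (1 - e1 * u \<beta>)) - integral {0..1} (\<lambda>\<beta>. 1 / (1 - e2 * u \<beta>))
      = integral {0..1} (\<lambda>\<beta>. 1 / (1 - e1 * u \<beta>) - 1 / (1 - e2 * u \<beta>))"
    by (rule integral_diff[symmetric]) (use P1(1) P2(1) integrable_continuous_real in auto)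
  also have "norm \<dots> \<le> (M * \<bar>e1 - e2\<bar> / c\<^sup>2) * (1 - 0)"
  proof (rule integral_bound)
    show "continuous_on {0..1} (\<lambda>\<beta>. 1 / (1 - e1 * u \<beta>) - 1 / (1 - e2 * u \<beta>))"
      by (rule continuous_on_diff[OF P1(1) P2(1)])
    fix \<beta> :: real assume b: "\<beta> \<in> {0..1}"
    have p1: "c \<le> 1 - e1 * u \<beta>" and p2: "c \<le> 1 - e2 * u \<beta>" using J1[OF b] J2[OF b] .
    have pp: "c\<^sup>2 \<le> (1 - e1 * u \<beta>) * (1 - e2 * u \<beta>)"
      using mult_mono[OF p1 p2] c p1 by (simp add: power2_eq_square)
    have "1 / (1 - e1 * u \<beta>) - 1 / (1 - e2 * u \<beta>) = (e1 - e2) * u \<beta> / ((1 - e1 * u \<beta>) * (1 - e2 * u \<beta>))"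
      using p1 p2 c by (simp add: field_simps)
    hence "norm (1 / (1 - e1 * u \<beta>) - 1 / (1 - e2 * u \<beta>))
        = \<bar>e1 - e2\<bar> * \<bar>u \<beta>\<bar> / ((1 - e1 * u \<beta>) * (1 - e2 * u \<beta>))"
      using p1 p2 c by (simp add: abs_mult abs_divide)
    also have "\<dots> \<le> \<bar>e1 - e2\<bar> * M / c\<^sup>2"
      by (rule frac_le) (use M[OF b] pp c in \<open>auto intro: mult_left_mono\<close>)
    finally show "norm (1 / (1 - e1 * u \<beta>) - 1 / (1 - e2 * u \<beta>)) \<le> M * \<bar>e1 - e2\<bar> / c\<^sup>2"
      by (simp add: mult.commute)
  qed simp
  finally show ?thesis by simp
qed

lemma inverse_sq_lipschitz:
  fixes K1 K2 :: real
  assumes "1 \<le> K1" "K1 \<le> C" "1 \<le> K2" "K2 \<le> C"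
  shows "\<bar>1 / K1\<^sup>2 - 1 / K2\<^sup>2\<bar> \<le> 2 * C * \<bar>K1 - K2\<bar>"
proof -
  have "\<bar>1 / K1\<^sup>2 - 1 / K2\<^sup>2\<bar> = \<bar>K1 - K2\<bar> * (K1 + K2) / (K1\<^sup>2 * K2\<^sup>2)"
  proof -
    have e: "1 / K1\<^sup>2 - 1 / K2\<^sup>2 = (K2 - K1) * (K1 + K2) / (K1\<^sup>2 * K2\<^sup>2)"
      using assms by (simp add: field_simps power2_eq_square)
    show ?thesis unfolding e abs_divide abs_mult using assms by (simp add: abs_minus_commute)
  qed
  also have "\<dots> \<le> \<bar>K1 - K2\<bar> * (K1 + K2)"
  proof -
    have "1 \<le> K1\<^sup>2" "1 \<le> K2\<^sup>2" using assms by (simp_all add: one_le_power)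
    hence "1 * 1 \<le> K1\<^sup>2 * K2\<^sup>2" by (intro mult_mono) auto
    hence "\<bar>K1 - K2\<bar> * (K1 + K2) / (K1\<^sup>2 * K2\<^sup>2) \<le> \<bar>K1 - K2\<bar> * (K1 + K2) / 1"
      using assms by (intro divide_left_mono) auto
    thus ?thesis by simp
  qed
  also have "\<dots> \<le> \<bar>K1 - K2\<bar> * (2 * C)" using assms by (intro mult_left_mono) auto
  also have "\<dots> = 2 * C * \<bar>K1 - K2\<bar>" by simp
  finally show ?thesis .
qed

lemma smooth_family_continuous:
  "smooth_family S D \<Longrightarrow> continuous_on S (\<lambda>p. D i j (fst p) (snd p))"
  unfolding smooth_family_def by blast

lemma smooth_family_chain:
  assumes sf: "smooth_family S D"
    and inS: "\<And>r. r \<in> U \<Longrightarrow> (c1 r, c2 r) \<in> S" and r: "r \<in> U"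
    and d1: "(c1 has_real_derivative d1) (at r within U)"
    and d2: "(c2 has_real_derivative d2) (at r within U)"
  shows "((\<lambda>r. D i j (c1 r) (c2 r)) has_real_derivative
           (D (Suc i) j (c1 r) (c2 r) * d1 + D i (Suc j) (c1 r) (c2 r) * d2)) (at r within U)"
proof -
  have f: "((\<lambda>r. (c1 r, c2 r)) has_derivative (\<lambda>h. (h * d1, h * d2))) (at r within U)"
    using has_derivative_Pair[OF d1[unfolded has_field_derivative_def] d2[unfolded has_field_derivative_def]]
    by (simp add: mult.commute)
  have "((\<lambda>q. D i j (fst q) (snd q)) has_derivative
      (\<lambda>h. D (Suc i) j (c1 r) (c2 r) * fst h + D i (Suc j) (c1 r) (c2 r) * snd h)) (at (c1 r, c2 r) within S)"
    using sf inS[OF r] unfolding smooth_family_def by fastforce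
  hence "((\<lambda>q. D i j (fst q) (snd q)) has_derivative
      (\<lambda>h. D (Suc i) j (c1 r) (c2 r) * fst h + D i (Suc j) (c1 r) (c2 r) * snd h))
      (at (c1 r, c2 r) within (\<lambda>r. (c1 r, c2 r)) ` U)"
    by (rule has_derivative_subset) (use inS in auto)
  from has_derivative_in_compose[OF f this]
  have "((\<lambda>x. D i j (c1 x) (c2 x)) has_derivative
      (\<lambda>x. D (Suc i) j (c1 r) (c2 r) * (x * d1) + D i (Suc j) (c1 r) (c2 r) * (x * d2))) (at r within U)"
    by simp
  then show ?thesis unfolding has_field_derivative_def
    by (rule has_derivative_eq_rhs) (simp add: fun_eq_iff algebra_simps)
qed

lemma smooth_family_bounded_unit_strip:
  assumes sf: "smooth_family S D" and sub: "{0..1} \<times> {0..<T} \<subseteq> S" and b: "0 \<le> b" "b < T"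
  shows "\<exists>M. \<forall>x\<in>{0..1}. \<forall>s\<in>{0..b}. \<bar>D 1 0 x s\<bar> \<le> M \<and> \<bar>D 2 0 x s\<bar> \<le> M"
proof -
  have K: "compact ({0..1::real} \<times> {0..b})" "{0..1::real} \<times> {0..b} \<subseteq> S"
    using b sub by (auto intro!: compact_Times)
  have "\<exists>M. \<forall>x\<in>{0..1::real}. \<forall>s\<in>{0..b}. \<bar>D i 0 x s\<bar> \<le> M" for i
  proof -
    have "compact ((\<lambda>p. D i 0 (fst p) (snd p)) ` ({0..1} \<times> {0..b}))"
      by (rule compact_continuous_image[OF continuous_on_subset[OF smooth_family_continuous[OF sf] K(2)] K(1)])
    hence "bounded ((\<lambda>p. D i 0 (fst p) (snd p)) ` ({0..1} \<times> {0..b}))" by (rule compact_imp_bounded)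
    then obtain B where "\<forall>x\<in>(\<lambda>p. D i 0 (fst p) (snd p)) ` ({0..1} \<times> {0..b}). norm x \<le> B"
      by (auto simp: bounded_iff)
    thus ?thesis by auto
  qed
  then obtain M1 M2 where "\<forall>x\<in>{0..1::real}. \<forall>s\<in>{0..b}. \<bar>D 1 0 x s\<bar> \<le> M1"
    and "\<forall>x\<in>{0..1::real}. \<forall>s\<in>{0..b}. \<bar>D 2 0 x s\<bar> \<le> M2" by meson
  hence "\<forall>x\<in>{0..1}. \<forall>s\<in>{0..b}. \<bar>D 1 0 x s\<bar> \<le> max M1 M2 \<and> \<bar>D 2 0 x s\<bar> \<le> max M1 M2"
    by (auto simp: le_max_iff_disj)
  thus ?thesis by blast
qed

text \<open>The setting shared by both boundary conditions: \<open>D\<close> is smooth on \<open>X \<times> [0,T)\<close>, where the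
  convex set \<open>X \<supseteq> [0,1]\<close> is \<open>\<real>\<close> in the periodic case and \<open>[0,1]\<close> in the Dirichlet case.\<close>

locale lagrangian_flow =
  fixes D :: "nat \<Rightarrow> nat \<Rightarrow> real \<Rightarrow> real \<Rightarrow> real" and \<gamma> :: "real \<Rightarrow> real \<Rightarrow> real"
    and X :: "real set" and T :: real
  assumes smooth: "smooth_family (X \<times> {0..<T}) D"
    and convex_X: "convex X" and unit_subset_X: "{0..1} \<subseteq> X"
    and pde: "\<And>x s. x \<in> X \<Longrightarrow> s \<in> {0<..<T} \<Longrightarrow>
       D 1 1 x s + D 0 0 x s * D 2 0 x s - (D 1 0 x s)\<^sup>2 = - 2 * integral {0..1} (\<lambda>y. (D 1 0 y s)\<^sup>2)"
    and flow_init: "\<And>a. a \<in> {0..1} \<Longrightarrow> \<gamma> a 0 = a"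
    and flow_ode: "\<And>a s. a \<in> {0..1} \<Longrightarrow> s \<in> {0..<T} \<Longrightarrow>
       (\<gamma> a has_real_derivative D 0 0 (\<gamma> a s) s) (at s within {0..<T})"
    and flow_in_X: "\<And>a s. a \<in> {0..1} \<Longrightarrow> s \<in> {0..<T} \<Longrightarrow> \<gamma> a s \<in> X"
    and local_bounds: "\<And>b. 0 \<le> b \<Longrightarrow> b < T \<Longrightarrow>
       \<exists>M. \<forall>x\<in>X. \<forall>s\<in>{0..b}. \<bar>D 1 0 x s\<bar> \<le> M \<and> \<bar>D 2 0 x s\<bar> \<le> M"
begin

lemma has_derivative_x:
  assumes "x \<in> X" "s \<in> {0..<T}"
  shows "((\<lambda>z. D i j z s) has_real_derivative D (Suc i) j x s) (at x within X)"
  using smooth_family_chain[OF smooth, of X "\<lambda>z. z" "\<lambda>z. s" x 1 0 i j] assms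
  by (auto intro!: derivative_eq_intros)

lemma has_derivative_x_comp:
  assumes "\<And>r. r \<in> U \<Longrightarrow> c r \<in> X" "s \<in> {0..<T}" "r \<in> U"
    "(c has_real_derivative d) (at r within U)"
  shows "((\<lambda>r. D i j (c r) s) has_real_derivative D (Suc i) j (c r) s * d) (at r within U)"
  using smooth_family_chain[OF smooth, of U c "\<lambda>z. s" r d 0 i j] assms
  by (auto intro!: derivative_eq_intros)

lemma has_derivative_along_flow:
  assumes "a \<in> {0..1}" "s \<in> {0..<T}"
  shows "((\<lambda>r. D i j (\<gamma> a r) r) has_real_derivative
     (D (Suc i) j (\<gamma> a s) s * D 0 0 (\<gamma> a s) s + D i (Suc j) (\<gamma> a s) s)) (at s within {0..<T})"
  using smooth_family_chain[OF smooth, of "{0..<T}" "\<gamma> a" "\<lambda>r. r" s "D 0 0 (\<gamma> a s) s" 1 i j]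
    assms flow_in_X flow_ode
  by (auto intro!: derivative_eq_intros)

lemma continuous_along_flow: "a \<in> {0..1} \<Longrightarrow> continuous_on {0..<T} (\<lambda>r. D i j (\<gamma> a r) r)"
  using has_derivative_along_flow by (rule has_real_derivative_continuous_on)

lemma continuous_flow: "a \<in> {0..1} \<Longrightarrow> continuous_on {0..<T} (\<gamma> a)"
  using flow_ode by (rule has_real_derivative_continuous_on)

lemma local_bound_nonneg:
  assumes "\<And>x r. x \<in> X \<Longrightarrow> r \<in> {0..t} \<Longrightarrow> \<bar>D 1 0 x r\<bar> \<le> M" "0 \<le> t"
  shows "0 \<le> M"
  using assms(1)[of 0 0] unit_subset_X assms(2) by force

lemma lipschitz_x:
  assumes s: "s \<in> {0..<T}" and M: "\<And>z. z \<in> X \<Longrightarrow> \<bar>D (Suc i) 0 z s\<bar> \<le> M"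
    and xy: "x \<in> X" "y \<in> X"
  shows "\<bar>D i 0 y s - D i 0 x s\<bar> \<le> M * \<bar>y - x\<bar>"
  using field_differentiable_bound[OF convex_X, of "\<lambda>z. D i 0 z s" "\<lambda>z. D (Suc i) 0 z s" M y x]
    has_derivative_x[OF _ s] M xy by auto

lemma taylor_remainder_x:
  assumes s: "s \<in> {0..<T}" and M: "\<And>z. z \<in> X \<Longrightarrow> \<bar>D 2 0 z s\<bar> \<le> M"
    and xy: "x \<in> X" "y \<in> X"
  shows "\<bar>D 0 0 y s - D 0 0 x s - D 1 0 x s * (y - x)\<bar> \<le> M * (y - x)\<^sup>2"
proof -
  have seg: "closed_segment x y \<subseteq> X" using convex_X xy convex_contains_segment by blast
  have "norm ((D 0 0 y s - D 1 0 x s * y) - (D 0 0 x s - D 1 0 x s * x)) \<le> (M * \<bar>y - x\<bar>) * norm (y - x)"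
  proof (rule field_differentiable_bound[of "closed_segment x y" "\<lambda>z. D 0 0 z s - D 1 0 x s * z"
        "\<lambda>z. D 1 0 z s - D 1 0 x s"])
    fix z assume z: "z \<in> closed_segment x y"
    hence zX: "z \<in> X" using seg by blast
    show "((\<lambda>z. D 0 0 z s - D 1 0 x s * z) has_field_derivative D 1 0 z s - D 1 0 x s)
        (at z within closed_segment x y)"
      using has_field_derivative_subset[OF has_derivative_x[OF zX s, of 0 0] seg]
      by (auto intro!: derivative_eq_intros)
    have "\<bar>D 1 0 z s - D 1 0 x s\<bar> \<le> M * \<bar>z - x\<bar>"
      using lipschitz_x[OF s _ xy(1) zX, where i=1 and M=M] M by (simp add: numeral_2_eq_2)
    also have "\<dots> \<le> M * \<bar>y - x\<bar>"
      using M[OF xy(1)] segment_bound(1)[OF z] by (intro mult_left_mono) auto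
    finally show "norm (D 1 0 z s - D 1 0 x s) \<le> M * \<bar>y - x\<bar>" by simp
  qed auto
  thus ?thesis by (simp add: power2_eq_square algebra_simps)
qed

lemma solutions_sq_diff_bound:
  assumes cX: "\<And>s. s \<in> {0..<T} \<Longrightarrow> c s \<in> X" "\<And>s. s \<in> {0..<T} \<Longrightarrow> c' s \<in> X"
    and c: "\<And>s. s \<in> {0..<T} \<Longrightarrow> (c has_real_derivative D 0 0 (c s) s) (at s within {0..<T})"
    and c': "\<And>s. s \<in> {0..<T} \<Longrightarrow> (c' has_real_derivative D 0 0 (c' s) s) (at s within {0..<T})"
    and t: "0 \<le> t" "t < T" and M: "\<And>x r. x \<in> X \<Longrightarrow> r \<in> {0..t} \<Longrightarrow> \<bar>D 1 0 x r\<bar> \<le> M"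
  shows "(c t - c' t)\<^sup>2 \<le> exp (2 * M * t) * (c 0 - c' 0)\<^sup>2"
proof -
  have "(c t - c' t)\<^sup>2 \<le> exp ((2 * M) * t) * ((c 0 - c' 0)\<^sup>2 + 0 * t)"
  proof (rule gronwall_affine[where E="\<lambda>s. (c s - c' s)\<^sup>2"
      and E'="\<lambda>r. 2 * (c r - c' r) * (D 0 0 (c r) r - D 0 0 (c' r) r)"])
    show "continuous_on {0..t} (\<lambda>s. (c s - c' s)\<^sup>2)"
      by (intro continuous_intros continuous_on_subset[OF has_real_derivative_continuous_on[OF c]]
          continuous_on_subset[OF has_real_derivative_continuous_on[OF c']]) (use t in auto)
    fix r assume r: "0 < r" "r < t"
    hence rT: "0 < r" "r < T" "r \<in> {0..<T}" using t by auto
    show "((\<lambda>s. (c s - c' s)\<^sup>2) has_real_derivative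
        2 * (c r - c' r) * (D 0 0 (c r) r - D 0 0 (c' r) r)) (at r)"
      using has_real_derivative_at_of_within_Ico[OF c[OF rT(3)] rT(1,2)]
        has_real_derivative_at_of_within_Ico[OF c'[OF rT(3)] rT(1,2)]
      by (auto intro!: derivative_eq_intros)
    have "\<bar>D 0 0 (c r) r - D 0 0 (c' r) r\<bar> \<le> M * \<bar>c r - c' r\<bar>"
      by (rule lipschitz_x[OF rT(3)]) (use M r cX[OF rT(3)] in auto)
    hence "(c r - c' r) * (D 0 0 (c r) r - D 0 0 (c' r) r) \<le> M * (c r - c' r)\<^sup>2"
      by (rule mult_le_sq_if_abs_le)
    thus "2 * (c r - c' r) * (D 0 0 (c r) r - D 0 0 (c' r) r) \<le> 2 * M * (c r - c' r)\<^sup>2 + 0"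
      unfolding mult.assoc by linarith
  qed (use t local_bound_nonneg[OF M t(1)] in auto)
  thus ?thesis by simp
qed

lemma flow_unique:
  assumes a: "a \<in> {0..1}" and c0: "c 0 = a"
    and cX: "\<And>s. s \<in> {0..<T} \<Longrightarrow> c s \<in> X"
    and c: "\<And>s. s \<in> {0..<T} \<Longrightarrow> (c has_real_derivative D 0 0 (c s) s) (at s within {0..<T})"
    and t: "t \<in> {0..<T}"
  shows "c t = \<gamma> a t"
proof -
  obtain M where "\<forall>x\<in>X. \<forall>r\<in>{0..t}. \<bar>D 1 0 x r\<bar> \<le> M \<and> \<bar>D 2 0 x r\<bar> \<le> M"
    using local_bounds t by fastforce
  hence "(c t - \<gamma> a t)\<^sup>2 \<le> exp (2 * M * t) * (c 0 - \<gamma> a 0)\<^sup>2"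
    using t by (intro solutions_sq_diff_bound cX c flow_in_X[OF a] flow_ode[OF a]) auto
  thus ?thesis using c0 flow_init[OF a] by simp
qed

definition ux :: "real \<Rightarrow> real \<Rightarrow> real" where
  "ux a s = D 1 0 (\<gamma> a s) s"

text \<open>The candidate for \<open>\<gamma>\<^sub>\<alpha>\<close>, from the variational equation \<open>(\<gamma>\<^sub>\<alpha>)' = u\<^sub>x(\<gamma>) \<gamma>\<^sub>\<alpha>\<close>.\<close>
definition flow_deriv :: "real \<Rightarrow> real \<Rightarrow> real" where
  "flow_deriv a s = exp (integral {0..s} (ux a))"

lemma continuous_ux: "a \<in> {0..1} \<Longrightarrow> continuous_on {0..<T} (ux a)"
  unfolding ux_def using continuous_along_flow by blast

lemma flow_deriv_init: "flow_deriv a 0 = 1"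
  by (simp add: flow_deriv_def)

lemma flow_deriv_pos: "0 < flow_deriv a s"
  by (simp add: flow_deriv_def)

lemma flow_deriv_has_derivative:
  assumes a: "a \<in> {0..1}" and s: "s \<in> {0..<T}"
  shows "(flow_deriv a has_real_derivative ux a s * flow_deriv a s) (at s within {0..<T})"
proof -
  define b where "b = (s + T) / 2"
  have sb: "s < b" "b < T" "0 \<le> s" using s by (auto simp: b_def)
  have "continuous_on {0..b} (ux a)"
    by (rule continuous_on_subset[OF continuous_ux[OF a]]) (use sb in auto)
  hence "((\<lambda>x. integral {0..x} (ux a)) has_real_derivative ux a s) (at s within {0..b})"
    by (rule integral_has_real_derivative) (use sb in auto)
  hence "(flow_deriv a has_real_derivative exp (integral {0..s} (ux a)) * ux a s) (at s within {0..b})"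
    unfolding flow_deriv_def[abs_def] by (rule DERIV_chain2[OF DERIV_exp])
  moreover have "at s within {0..b} = at s within {0..<T}" by (rule at_within_Icc_eq_Ico) (use sb in auto)
  ultimately show ?thesis by (simp add: flow_deriv_def mult.commute)
qed

lemma continuous_flow_deriv: "a \<in> {0..1} \<Longrightarrow> continuous_on {0..<T} (flow_deriv a)"
  using flow_deriv_has_derivative by (rule has_real_derivative_continuous_on)

lemma abs_integral_ux_le:
  assumes a: "a \<in> {0..1}" and s: "0 \<le> s" "s < T"
    and M: "\<And>x r. x \<in> X \<Longrightarrow> r \<in> {0..s} \<Longrightarrow> \<bar>D 1 0 x r\<bar> \<le> M"
  shows "\<bar>integral {0..s} (ux a)\<bar> \<le> M * s"
proof -
  have "norm (integral {0..s} (ux a)) \<le> M * (s - 0)"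
  proof (rule integral_bound)
    show "continuous_on {0..s} (ux a)"
      by (rule continuous_on_subset[OF continuous_ux[OF a]]) (use s in auto)
    fix r assume r: "r \<in> {0..s}"
    hence "\<gamma> a r \<in> X" using flow_in_X[OF a] s by auto
    thus "norm (ux a r) \<le> M" using M r by (simp add: ux_def)
  qed (use s in auto)
  thus ?thesis by simp
qed

lemma flow_linearization_remainder:
  assumes a: "a \<in> {0..1}" and \<beta>: "\<beta> \<in> {0..1}" and t: "0 \<le> t" "t < T"
    and M: "\<And>x r. x \<in> X \<Longrightarrow> r \<in> {0..t} \<Longrightarrow> \<bar>D 1 0 x r\<bar> \<le> M \<and> \<bar>D 2 0 x r\<bar> \<le> M"
    and r: "r \<in> {0..t}"
  shows "\<bar>D 0 0 (\<gamma> \<beta> r) r - D 0 0 (\<gamma> a r) r - ux a r * (\<gamma> \<beta> r - \<gamma> a r)\<bar>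
    \<le> M * exp (2 * M * t) * (\<beta> - a)\<^sup>2"
proof -
  have M0: "0 \<le> M" using local_bound_nonneg[of t M] M t by blast
  have rT: "r \<in> {0..<T}" using r t by auto
  have "(\<gamma> \<beta> r - \<gamma> a r)\<^sup>2 \<le> exp (2 * M * r) * (\<gamma> \<beta> 0 - \<gamma> a 0)\<^sup>2"
    using r t M by (intro solutions_sq_diff_bound flow_in_X flow_ode a \<beta>) auto
  also have "\<dots> \<le> exp (2 * M * t) * (\<beta> - a)\<^sup>2"
    using r M0 flow_init[OF a] flow_init[OF \<beta>] by (auto intro!: mult_right_mono mult_left_mono)
  finally have sq: "(\<gamma> \<beta> r - \<gamma> a r)\<^sup>2 \<le> exp (2 * M * t) * (\<beta> - a)\<^sup>2" .
  have "\<bar>D 0 0 (\<gamma> \<beta> r) r - D 0 0 (\<gamma> a r) r - ux a r * (\<gamma> \<beta> r - \<gamma> a r)\<bar> \<le> M * (\<gamma> \<beta> r - \<gamma> a r)\<^sup>2"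
    unfolding ux_def
    by (rule taylor_remainder_x[OF rT]) (use M r flow_in_X[OF a rT] flow_in_X[OF \<beta> rT] in auto)
  also have "\<dots> \<le> M * exp (2 * M * t) * (\<beta> - a)\<^sup>2"
    using mult_left_mono[OF sq M0] by (simp add: mult.assoc)
  finally show ?thesis .
qed

lemma flow_linearization_sq_error:
  assumes a: "a \<in> {0..1}" and \<beta>: "\<beta> \<in> {0..1}" and t: "0 \<le> t" "t < T"
    and M: "\<And>x r. x \<in> X \<Longrightarrow> r \<in> {0..t} \<Longrightarrow> \<bar>D 1 0 x r\<bar> \<le> M \<and> \<bar>D 2 0 x r\<bar> \<le> M"
  shows "(\<gamma> \<beta> t - \<gamma> a t - (\<beta> - a) * flow_deriv a t)\<^sup>2
    \<le> exp ((2 * M + 1) * t) * (M * exp (2 * M * t))\<^sup>2 * t * ((\<beta> - a)\<^sup>2)\<^sup>2"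
proof -
  have M0: "0 \<le> M" using local_bound_nonneg[of t M] M t by blast
  define K where "K = M * exp (2 * M * t)"
  define h where "h = \<beta> - a"
  define e where "e r = \<gamma> \<beta> r - \<gamma> a r - h * flow_deriv a r" for r
  have "(e t)\<^sup>2 \<le> exp ((2 * M + 1) * t) * ((e 0)\<^sup>2 + (K\<^sup>2 * h ^ 4) * t)"
  proof (rule gronwall_affine[where E="\<lambda>r. (e r)\<^sup>2" and E'="\<lambda>r. 2 * e r *
      (D 0 0 (\<gamma> \<beta> r) r - D 0 0 (\<gamma> a r) r - h * (ux a r * flow_deriv a r))"])
    show "continuous_on {0..t} (\<lambda>r. (e r)\<^sup>2)" unfolding e_def
      by (intro continuous_intros continuous_on_subset[OF continuous_flow[OF \<beta>]]
          continuous_on_subset[OF continuous_flow[OF a]]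
          continuous_on_subset[OF continuous_flow_deriv[OF a]]) (use t in auto)
    fix r assume r: "0 < r" "r < t"
    hence rT: "0 < r" "r < T" "r \<in> {0..<T}" using t by auto
    note at = has_real_derivative_at_of_within_Ico[OF _ rT(1,2)]
    show "((\<lambda>r. (e r)\<^sup>2) has_real_derivative 2 * e r *
        (D 0 0 (\<gamma> \<beta> r) r - D 0 0 (\<gamma> a r) r - h * (ux a r * flow_deriv a r))) (at r)"
      unfolding e_def[abs_def]
      using at[OF flow_ode[OF \<beta> rT(3)]] at[OF flow_ode[OF a rT(3)]]
        at[OF flow_deriv_has_derivative[OF a rT(3)]]
      by (auto intro!: derivative_eq_intros) (simp add: algebra_simps)
    define R where "R = D 0 0 (\<gamma> \<beta> r) r - D 0 0 (\<gamma> a r) r - ux a r * (\<gamma> \<beta> r - \<gamma> a r)"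
    have "\<bar>R\<bar> \<le> K * h\<^sup>2" unfolding R_def K_def h_def
      by (rule flow_linearization_remainder[OF a \<beta> t M]) (use r in auto)
    hence "R\<^sup>2 \<le> K\<^sup>2 * h ^ 4"
      using power_mono[of "\<bar>R\<bar>" "K * h\<^sup>2" 2] by (simp add: power_mult_distrib flip: power_mult)
    moreover have "\<bar>ux a r\<bar> \<le> M" using M[OF flow_in_X[OF a rT(3)], of r] r by (simp add: ux_def)
    moreover have "D 0 0 (\<gamma> \<beta> r) r - D 0 0 (\<gamma> a r) r - h * (ux a r * flow_deriv a r) = R + ux a r * e r"
      by (simp add: R_def e_def algebra_simps)
    ultimately show "2 * e r * (D 0 0 (\<gamma> \<beta> r) r - D 0 0 (\<gamma> a r) r - h * (ux a r * flow_deriv a r))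
        \<le> (2 * M + 1) * (e r)\<^sup>2 + K\<^sup>2 * h ^ 4"
      by (simp add: two_mul_le_sq_bound)
  qed (use t M0 in auto)
  thus ?thesis using flow_init[OF a] flow_init[OF \<beta>]
    by (simp add: e_def h_def K_def flow_deriv_init algebra_simps flip: power_mult)
qed

lemma flow_linearization_error:
  assumes a: "a \<in> {0..1}" and t: "0 \<le> t" "t < T"
  shows "\<exists>C. \<forall>\<beta>\<in>{0..1}. \<bar>\<gamma> \<beta> t - \<gamma> a t - (\<beta> - a) * flow_deriv a t\<bar> \<le> C * (\<beta> - a)\<^sup>2"
proof -
  obtain M where M: "\<And>x r. x \<in> X \<Longrightarrow> r \<in> {0..t} \<Longrightarrow> \<bar>D 1 0 x r\<bar> \<le> M \<and> \<bar>D 2 0 x r\<bar> \<le> M"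
    using local_bounds[OF t] by blast
  define C where "C = sqrt (exp ((2 * M + 1) * t) * (M * exp (2 * M * t))\<^sup>2 * t)"
  have "\<bar>\<gamma> \<beta> t - \<gamma> a t - (\<beta> - a) * flow_deriv a t\<bar> \<le> C * (\<beta> - a)\<^sup>2" if \<beta>: "\<beta> \<in> {0..1}" for \<beta>
  proof -
    have "(\<gamma> \<beta> t - \<gamma> a t - (\<beta> - a) * flow_deriv a t)\<^sup>2 \<le> (C * (\<beta> - a)\<^sup>2)\<^sup>2"
      using flow_linearization_sq_error[OF a \<beta> t M] t by (simp add: C_def power_mult_distrib)
    hence "\<bar>\<gamma> \<beta> t - \<gamma> a t - (\<beta> - a) * flow_deriv a t\<bar> \<le> \<bar>C * (\<beta> - a)\<^sup>2\<bar>"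
      by (simp only: abs_le_square_iff)
    moreover have "0 \<le> C" using t by (simp add: C_def)
    ultimately show ?thesis by simp
  qed
  thus ?thesis by blast
qed

lemma flow_has_derivative_initial:
  assumes "a \<in> {0..1}" "t \<in> {0..<T}"
  shows "((\<lambda>\<beta>. \<gamma> \<beta> t) has_real_derivative flow_deriv a t) (at a within {0..1})"
proof -
  obtain C where "\<forall>\<beta>\<in>{0..1}. \<bar>\<gamma> \<beta> t - \<gamma> a t - (\<beta> - a) * flow_deriv a t\<bar> \<le> C * (\<beta> - a)\<^sup>2"
    using flow_linearization_error[of a t] assms by auto
  thus ?thesis by (intro has_real_derivative_if_quadratic_remainder) blast
qed


definition v :: "real \<Rightarrow> real \<Rightarrow> real" where
  "v a s = 1 / flow_deriv a s"

definition v' :: "real \<Rightarrow> real \<Rightarrow> real" where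
  "v' a s = - ux a s * v a s"

definition energy :: "real \<Rightarrow> real" where
  "energy s = integral {0..1} (\<lambda>y. (D 1 0 y s)\<^sup>2)"

lemma v_pos: "0 < v a s"
  by (simp add: v_def flow_deriv_pos)

lemma v_init: "v a 0 = 1"
  by (simp add: v_def flow_deriv_init)

lemma v'_init: "a \<in> {0..1} \<Longrightarrow> v' a 0 = - D 1 0 a 0"
  by (simp add: v'_def ux_def v_init flow_init)

lemma v_has_derivative:
  assumes "a \<in> {0..1}" "s \<in> {0..<T}"
  shows "(v a has_real_derivative v' a s) (at s within {0..<T})"
  using flow_deriv_has_derivative[OF assms] flow_deriv_pos[of a s] unfolding v_def[abs_def] v'_def
  by (auto intro!: derivative_eq_intros simp: power2_eq_square field_simps)

lemma continuous_v: "a \<in> {0..1} \<Longrightarrow> continuous_on {0..<T} (v a)"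
  using v_has_derivative by (rule has_real_derivative_continuous_on)

lemma continuous_v': "a \<in> {0..1} \<Longrightarrow> continuous_on {0..<T} (v' a)"
  unfolding v'_def[abs_def] by (intro continuous_intros continuous_ux continuous_v)

lemma ux_riccati:
  assumes a: "a \<in> {0..1}" and s: "0 < s" "s < T"
  shows "(ux a has_real_derivative (ux a s)\<^sup>2 - 2 * energy s) (at s within {0..<T})"
proof -
  have sT: "s \<in> {0..<T}" using s by auto
  have "D 1 1 (\<gamma> a s) s + D 0 0 (\<gamma> a s) s * D 2 0 (\<gamma> a s) s - (D 1 0 (\<gamma> a s) s)\<^sup>2 = - 2 * energy s"
    using pde[OF flow_in_X[OF a sT]] s by (simp add: energy_def)
  hence "D (Suc 1) 0 (\<gamma> a s) s * D 0 0 (\<gamma> a s) s + D 1 (Suc 0) (\<gamma> a s) s = (ux a s)\<^sup>2 - 2 * energy s"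
    by (simp add: ux_def algebra_simps numeral_2_eq_2)
  from DERIV_cong[OF has_derivative_along_flow[OF a sT, of 1 0] this]
  show ?thesis unfolding ux_def[abs_def] by simp
qed

lemma v'_has_derivative:
  assumes a: "a \<in> {0..1}" and s: "0 < s" "s < T"
  shows "(v' a has_real_derivative 2 * energy s * v a s) (at s within {0..<T})"
  unfolding v'_def[abs_def]
  using ux_riccati[OF a s] v_has_derivative[OF a, of s] s
  by (auto intro!: derivative_eq_intros simp: v'_def power2_eq_square algebra_simps)

lemma energy_bounds:
  assumes s: "s \<in> {0..<T}" and M: "\<And>x. x \<in> X \<Longrightarrow> \<bar>D 1 0 x s\<bar> \<le> M"
  shows "0 \<le> energy s" "energy s \<le> M\<^sup>2"
proof -
  have "continuous_on X (\<lambda>y. D 1 0 y s)"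
    using has_derivative_x[OF _ s, of _ 1 0] by (rule has_real_derivative_continuous_on)
  hence int: "(\<lambda>y. (D 1 0 y s)\<^sup>2) integrable_on {0..1}"
    by (intro integrable_continuous_real continuous_intros continuous_on_subset[OF _ unit_subset_X])
  show "0 \<le> energy s" unfolding energy_def by (rule integral_nonneg[OF int]) simp
  have "energy s \<le> integral {0..1} (\<lambda>y::real. M\<^sup>2)" unfolding energy_def
  proof (rule Henstock_Kurzweil_Integration.integral_le[OF int integrable_const_ivl])
    fix y :: real assume "y \<in> {0..1}"
    hence "\<bar>D 1 0 y s\<bar> \<le> M" using M unit_subset_X by auto
    thus "(D 1 0 y s)\<^sup>2 \<le> M\<^sup>2" using abs_le_square_iff by fastforce
  qed
  thus "energy s \<le> M\<^sup>2" by simp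
qed

end

locale lagrangian_flow_bc = lagrangian_flow +
  assumes flow_ends: "\<And>s. s \<in> {0..<T} \<Longrightarrow> \<gamma> 1 s - \<gamma> 0 s = 1"
    and initial_ends: "D 0 0 0 0 = D 0 0 1 0"
    and T_pos: "0 < T"
begin

lemma initial_has_derivative:
  assumes "x \<in> {0..1}"
  shows "((\<lambda>z. D i 0 z 0) has_real_derivative D (Suc i) 0 x 0) (at x within {0..1})"
  using has_field_derivative_subset[OF has_derivative_x[of x 0 i 0] unit_subset_X] assms unit_subset_X T_pos
  by auto

lemma continuous_initial: "continuous_on {0..1} (\<lambda>z. D i 0 z 0)"
  using initial_has_derivative by (rule has_real_derivative_continuous_on)

lemma initial_critical_point_exists: "\<exists>b\<in>{0..1}. D 1 0 b 0 = 0"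
proof -
  have "(\<lambda>z. D 0 0 z 0) differentiable (at x)" if "0 < x" "x < 1" for x
  proof -
    have "at x within X = at x"
      using interior_mono[OF unit_subset_X] that by (intro at_within_interior) auto
    moreover have "x \<in> X" using unit_subset_X that by auto
    ultimately have "((\<lambda>z. D 0 0 z 0) has_real_derivative D 1 0 x 0) (at x)"
      using has_derivative_x[of x 0 0 0] T_pos by simp
    thus ?thesis unfolding real_differentiable_def by blast
  qed
  then obtain z where z: "0 < z" "z < 1" "((\<lambda>z. D 0 0 z 0) has_real_derivative 0) (at z)"
    using Rolle[OF zero_less_one initial_ends continuous_initial] by blast
  have "((\<lambda>z. D 0 0 z 0) has_real_derivative D 1 0 z 0) (at z within {0..1})"
    using initial_has_derivative[of z 0] z by simp
  moreover have "((\<lambda>z. D 0 0 z 0) has_real_derivative 0) (at z within {0..1})"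
    using z(3) by (rule has_field_derivative_at_within)
  ultimately have "D 1 0 z 0 = 0"
    using has_field_derivative_unique at_within_Icc_nontrivial[of 0 1 z] z by simp
  thus ?thesis using z by auto
qed

lemma integral_flow_deriv:
  assumes t: "t \<in> {0..<T}"
  shows "((\<lambda>a. flow_deriv a t) has_integral 1) {0..1}"
proof -
  have "((\<lambda>a. flow_deriv a t) has_integral (\<gamma> 1 t - \<gamma> 0 t)) {0..1}"
  proof (rule fundamental_theorem_of_calculus)
    fix x :: real assume "x \<in> {0..1}"
    thus "((\<lambda>b. \<gamma> b t) has_vector_derivative flow_deriv x t) (at x within {0..1})"
      using flow_has_derivative_initial[of x t] t by (simp add: has_real_derivative_iff_has_vector_derivative)
  qed simp
  thus ?thesis using flow_ends[OF t] by simp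
qed

text \<open>Two fundamental solutions of \<open>\<phi>'' = 2 energy \<phi>\<close>, built from trajectories: \<open>\<phi>\<^sub>1\<close> is \<open>v\<close>
  at a critical point of \<open>u\<^sub>0\<close>, and \<open>\<phi>\<^sub>2\<close> a normalized difference of two such \<open>v\<close>. When \<open>u\<^sub>0' \<equiv> 0\<close>
  there is no second solution of this form, and \<open>\<phi>\<^sub>2 = 0\<close> serves just as well since then every
  \<open>v(\<alpha>,\<cdot>)\<close> equals \<open>\<phi>\<^sub>1\<close>.\<close>

definition crit_pt :: real where
  "crit_pt = (SOME b. b \<in> {0..1} \<and> D 1 0 b 0 = 0)"

definition nondegenerate :: bool where
  "nondegenerate \<longleftrightarrow> (\<exists>a\<in>{0..1}. D 1 0 a 0 \<noteq> 0)"

definition noncrit_pt :: real where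
  "noncrit_pt = (SOME a. a \<in> {0..1} \<and> D 1 0 a 0 \<noteq> 0)"

definition phi1 :: "real \<Rightarrow> real" where
  "phi1 = v crit_pt"

definition phi1' :: "real \<Rightarrow> real" where
  "phi1' = v' crit_pt"

definition phi2 :: "real \<Rightarrow> real" where
  "phi2 s = (if nondegenerate then (v crit_pt s - v noncrit_pt s) / D 1 0 noncrit_pt 0 else 0)"

definition phi2' :: "real \<Rightarrow> real" where
  "phi2' s = (if nondegenerate then (v' crit_pt s - v' noncrit_pt s) / D 1 0 noncrit_pt 0 else 0)"

lemma crit_pt: "crit_pt \<in> {0..1}" "D 1 0 crit_pt 0 = 0"
  using someI_ex[OF initial_critical_point_exists[unfolded Bex_def]] unfolding crit_pt_def by auto

lemma noncrit_pt: "nondegenerate \<Longrightarrow> noncrit_pt \<in> {0..1} \<and> D 1 0 noncrit_pt 0 \<noteq> 0"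
  unfolding nondegenerate_def noncrit_pt_def by (rule someI_ex) blast

lemma degenerate_initial: "\<not> nondegenerate \<Longrightarrow> a \<in> {0..1} \<Longrightarrow> D 1 0 a 0 = 0"
  unfolding nondegenerate_def by auto

lemma phi1_pos: "0 < phi1 s"
  by (simp add: phi1_def v_pos)

lemma phi_init:
  "phi1 0 = 1" "phi1' 0 = 0" "phi2 0 = 0" "phi2' 0 = (if nondegenerate then 1 else 0)"
  using crit_pt noncrit_pt by (auto simp: phi1_def phi1'_def phi2_def phi2'_def v_init v'_init)

lemma phi_has_derivative:
  assumes s: "s \<in> {0..<T}"
  shows "(phi1 has_real_derivative phi1' s) (at s within {0..<T})"
    and "(phi2 has_real_derivative phi2' s) (at s within {0..<T})"
proof -
  show "(phi1 has_real_derivative phi1' s) (at s within {0..<T})"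
    unfolding phi1_def phi1'_def using v_has_derivative[OF crit_pt(1) s] .
  show "(phi2 has_real_derivative phi2' s) (at s within {0..<T})"
  proof (cases nondegenerate)
    case True
    thus ?thesis unfolding phi2_def[abs_def] phi2'_def
      using v_has_derivative[OF crit_pt(1) s] v_has_derivative[OF conjunct1[OF noncrit_pt[OF True]] s]
        noncrit_pt[OF True]
      by (auto intro!: derivative_eq_intros simp: field_simps)
  qed (simp add: phi2_def[abs_def] phi2'_def)
qed

lemma phi'_has_derivative:
  assumes s: "0 < s" "s < T"
  shows "(phi1' has_real_derivative 2 * energy s * phi1 s) (at s within {0..<T})"
    and "(phi2' has_real_derivative 2 * energy s * phi2 s) (at s within {0..<T})"
proof -
  show "(phi1' has_real_derivative 2 * energy s * phi1 s) (at s within {0..<T})"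
    unfolding phi1'_def phi1_def using v'_has_derivative[OF crit_pt(1) s] .
  show "(phi2' has_real_derivative 2 * energy s * phi2 s) (at s within {0..<T})"
  proof (cases nondegenerate)
    case True
    thus ?thesis unfolding phi2'_def[abs_def] phi2_def
      using v'_has_derivative[OF crit_pt(1) s] v'_has_derivative[OF conjunct1[OF noncrit_pt[OF True]] s]
        noncrit_pt[OF True]
      by (auto intro!: derivative_eq_intros simp: field_simps)
  qed (simp add: phi2_def phi2'_def[abs_def])
qed

lemma continuous_phi:
  "continuous_on {0..<T} phi1" "continuous_on {0..<T} phi2"
  "continuous_on {0..<T} phi1'" "continuous_on {0..<T} phi2'"
proof -
  show "continuous_on {0..<T} phi1"
    using phi_has_derivative(1) by (rule has_real_derivative_continuous_on)
  show "continuous_on {0..<T} phi2"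
    using phi_has_derivative(2) by (rule has_real_derivative_continuous_on)
  show "continuous_on {0..<T} phi1'" unfolding phi1'_def using continuous_v'[OF crit_pt(1)] .
  show "continuous_on {0..<T} phi2'"
  proof (cases nondegenerate)
    case True
    thus ?thesis unfolding phi2'_def[abs_def]
      using continuous_v'[OF crit_pt(1)] continuous_v'[OF conjunct1[OF noncrit_pt[OF True]]]
        noncrit_pt[OF True]
      by (auto intro!: continuous_intros)
  qed (simp add: phi2'_def[abs_def])
qed

lemma v_eq_phi:
  assumes a: "a \<in> {0..1}" and s: "s \<in> {0..<T}"
  shows "v a s = phi1 s - phi2 s * D 1 0 a 0"
proof -
  obtain M where M: "\<And>x r. x \<in> X \<Longrightarrow> r \<in> {0..s} \<Longrightarrow> \<bar>D 1 0 x r\<bar> \<le> M"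
    using local_bounds[of s] s by fastforce
  define u where "u = D 1 0 a 0"
  have sub: "{0..s} \<subseteq> {0..<T}" using s by auto
  have "(\<lambda>r. v a r - phi1 r + phi2 r * u) s = 0"
  proof (rule second_order_linear_ode_unique[where g="\<lambda>r. v a r - phi1 r + phi2 r * u" and s=s
        and G="\<lambda>r. v' a r - phi1' r + phi2' r * u"
        and q="\<lambda>r. 2 * energy r" and Q="2 * M\<^sup>2"])
    show "continuous_on {0..s} (\<lambda>r. v a r - phi1 r + phi2 r * u)"
      by (intro continuous_intros continuous_on_subset[OF continuous_v[OF a] sub]
          continuous_on_subset[OF continuous_phi(1) sub] continuous_on_subset[OF continuous_phi(2) sub])
    show "continuous_on {0..s} (\<lambda>r. v' a r - phi1' r + phi2' r * u)"
      by (intro continuous_intros continuous_on_subset[OF continuous_v'[OF a] sub]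
          continuous_on_subset[OF continuous_phi(3) sub] continuous_on_subset[OF continuous_phi(4) sub])
    fix r assume r: "0 < r" "r < s"
    hence rT: "0 < r" "r < T" "r \<in> {0..<T}" using s by auto
    note at = has_real_derivative_at_of_within_Ico[OF _ rT(1,2)]
    show "((\<lambda>r. v a r - phi1 r + phi2 r * u) has_real_derivative v' a r - phi1' r + phi2' r * u) (at r)"
      using at[OF v_has_derivative[OF a rT(3)]] at[OF phi_has_derivative(1)[OF rT(3)]]
        at[OF phi_has_derivative(2)[OF rT(3)]]
      by (auto intro!: derivative_eq_intros)
    show "((\<lambda>r. v' a r - phi1' r + phi2' r * u) has_real_derivative
        2 * energy r * (v a r - phi1 r + phi2 r * u)) (at r)"
      using at[OF v'_has_derivative[OF a rT(1,2)]] at[OF phi'_has_derivative(1)[OF rT(1,2)]]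
        at[OF phi'_has_derivative(2)[OF rT(1,2)]]
      by (auto intro!: derivative_eq_intros simp: algebra_simps)
    show "\<bar>2 * energy r\<bar> \<le> 2 * M\<^sup>2" using energy_bounds[OF rT(3), of M] M r by auto
  qed (use s phi_init degenerate_initial[OF _ a] in \<open>auto simp: v_init v'_init[OF a] u_def\<close>)
  thus ?thesis by (simp add: u_def)
qed

lemma v'_eq_phi':
  assumes a: "a \<in> {0..1}" and s: "s \<in> {0..<T}"
  shows "v' a s = phi1' s - phi2' s * D 1 0 a 0"
proof -
  have "((\<lambda>r. phi1 r - phi2 r * D 1 0 a 0) has_real_derivative phi1' s - phi2' s * D 1 0 a 0)
      (at s within {0..<T})"
    using phi_has_derivative[OF s] by (auto intro!: derivative_eq_intros)
  hence "(v a has_real_derivative phi1' s - phi2' s * D 1 0 a 0) (at s within {0..<T})"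
    by (rule has_field_derivative_transform_within[OF _ zero_less_one s]) (use v_eq_phi[OF a] in auto)
  thus ?thesis
    using has_field_derivative_unique[OF v_has_derivative[OF a s]] at_within_Ico_nontrivial[OF s] by blast
qed

lemma wronskian:
  assumes "nondegenerate" and s: "s \<in> {0..<T}"
  shows "phi2' s * phi1 s - phi2 s * phi1' s = 1"
proof -
  define W where "W r = phi2' r * phi1 r - phi2 r * phi1' r" for r
  have "W s = W 0"
  proof (cases "s = 0")
    case False
    hence s: "0 < s" "s < T" using s by auto
    show ?thesis
    proof (rule DERIV_isconst_end[OF s(1)])
      show "continuous_on {0..s} W" unfolding W_def
        by (intro continuous_intros continuous_on_subset[OF continuous_phi(1)]
            continuous_on_subset[OF continuous_phi(2)] continuous_on_subset[OF continuous_phi(3)]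
            continuous_on_subset[OF continuous_phi(4)]) (use s in auto)
      fix r assume r: "0 < r" "r < s"
      hence rT: "0 < r" "r < T" "r \<in> {0..<T}" using s by auto
      note at = has_real_derivative_at_of_within_Ico[OF _ rT(1,2)]
      have "(W has_real_derivative phi2' r * phi1' r + 2 * energy r * phi2 r * phi1 r
          - (phi2 r * (2 * energy r * phi1 r) + phi2' r * phi1' r)) (at r)"
        unfolding W_def[abs_def]
        using at[OF phi_has_derivative(1)[OF rT(3)]] at[OF phi_has_derivative(2)[OF rT(3)]]
          at[OF phi'_has_derivative(1)[OF rT(1,2)]] at[OF phi'_has_derivative(2)[OF rT(1,2)]]
        by (auto intro!: derivative_eq_intros)
      thus "(W has_real_derivative 0) (at r)" by (simp add: algebra_simps)
    qed
  qed simp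
  thus ?thesis using phi_init \<open>nondegenerate\<close> by (simp add: W_def)
qed

lemma integral_inverse_v:
  "t \<in> {0..<T} \<Longrightarrow> ((\<lambda>a. 1 / v a t) has_integral 1) {0..1}"
  using integral_flow_deriv by (simp add: v_def)

lemma degenerate_initial_D20:
  assumes "\<not> nondegenerate" "a \<in> {0..1}"
  shows "D 2 0 a 0 = 0"
proof -
  have "((\<lambda>z. D 1 0 z 0) has_real_derivative D 2 0 a 0) (at a within {0..1})"
    using initial_has_derivative[OF assms(2), of 1] by (simp add: numeral_2_eq_2)
  moreover have "((\<lambda>z. D 1 0 z 0) has_real_derivative 0) (at a within {0..1})"
    by (rule has_field_derivative_transform_within[OF DERIV_const zero_less_one assms(2)])
      (use degenerate_initial[OF assms(1)] in auto)
  ultimately show ?thesis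
    using has_field_derivative_unique at_within_Icc_nontrivial[of 0 1 a] assms(2) by auto
qed

lemma D20_mult_wronskian:
  assumes "a \<in> {0..1}" "t \<in> {0..<T}"
  shows "D 2 0 a 0 * (phi2' t * phi1 t - phi2 t * phi1' t) = D 2 0 a 0"
  using wronskian[OF _ assms(2)] degenerate_initial_D20[OF _ assms(1)] by (cases nondegenerate) auto

lemma ux_eq_phi:
  assumes "a \<in> {0..1}" "t \<in> {0..<T}"
  shows "ux a t = - (phi1' t - phi2' t * D 1 0 a 0) / (phi1 t - phi2 t * D 1 0 a 0)"
proof -
  have "ux a t = - v' a t / v a t" using v_pos[of a t] by (simp add: v'_def)
  thus ?thesis using v_eq_phi[OF assms] v'_eq_phi'[OF assms] by simp
qed

lemma uxx_along_flow:
  assumes a: "a \<in> {0..1}" and t: "t \<in> {0..<T}"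
  shows "D 2 0 (\<gamma> a t) t = D 2 0 a 0 / v a t"
proof -
  have chain: "((\<lambda>\<beta>. ux \<beta> t) has_real_derivative D 2 0 (\<gamma> a t) t * flow_deriv a t)
      (at a within {0..1})"
    using has_derivative_x_comp[OF flow_in_X t a flow_has_derivative_initial[OF a t], of 1 0] t
    unfolding ux_def by (simp add: numeral_2_eq_2)
  define A B C E where "A = phi1' t" and "B = phi2' t" and "C = phi1 t" and "E = phi2 t"
  have v: "v a t = C - E * D 1 0 a 0" using v_eq_phi[OF a t] by (simp add: C_def E_def)
  have "((\<lambda>\<beta>. - (A - B * D 1 0 \<beta> 0) / (C - E * D 1 0 \<beta> 0)) has_real_derivative
      D 2 0 a 0 * (B * C - E * A) / (C - E * D 1 0 a 0)\<^sup>2) (at a within {0..1})"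
    using v_pos[of a t] initial_has_derivative[OF a, of 1] unfolding v
    by (auto intro!: derivative_eq_intros simp: numeral_2_eq_2 field_simps power2_eq_square)
  moreover have "D 2 0 a 0 * (B * C - E * A) = D 2 0 a 0"
    using D20_mult_wronskian[OF a t] by (simp add: A_def B_def C_def E_def)
  ultimately have "((\<lambda>\<beta>. - (A - B * D 1 0 \<beta> 0) / (C - E * D 1 0 \<beta> 0)) has_real_derivative
      D 2 0 a 0 / (v a t)\<^sup>2) (at a within {0..1})"
    by (simp add: v)
  hence "((\<lambda>\<beta>. ux \<beta> t) has_real_derivative D 2 0 a 0 / (v a t)\<^sup>2) (at a within {0..1})"
    by (rule has_field_derivative_transform_within[OF _ zero_less_one a])
      (use ux_eq_phi t in \<open>auto simp: A_def B_def C_def E_def\<close>)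
  hence "D 2 0 (\<gamma> a t) t * flow_deriv a t = D 2 0 a 0 / (v a t)\<^sup>2"
    by (rule has_field_derivative_unique[OF chain _ at_within_Icc_nontrivial[OF zero_less_one a]])
  moreover have "flow_deriv a t = 1 / v a t" by (simp add: v_def)
  ultimately show ?thesis using v_pos[of a t] by (simp add: field_simps power2_eq_square)
qed

lemma uxxx_along_flow:
  assumes a: "a \<in> {0..1}" and t: "t \<in> {0..<T}"
  shows "D 3 0 (\<gamma> a t) t = D 3 0 a 0 + phi2 t * (D 2 0 a 0)\<^sup>2 / v a t"
proof -
  have chain: "((\<lambda>\<beta>. D 2 0 (\<gamma> \<beta> t) t) has_real_derivative D 3 0 (\<gamma> a t) t * flow_deriv a t)
      (at a within {0..1})"
    using has_derivative_x_comp[OF flow_in_X t a flow_has_derivative_initial[OF a t], of 2 0] t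
    by (simp add: numeral_3_eq_3 numeral_2_eq_2)
  define C E where "C = phi1 t" and "E = phi2 t"
  have v: "v \<beta> t = C - E * D 1 0 \<beta> 0" if "\<beta> \<in> {0..1}" for \<beta>
    using v_eq_phi[OF that t] by (simp add: C_def E_def)
  have "((\<lambda>\<beta>. D 2 0 \<beta> 0 / (C - E * D 1 0 \<beta> 0)) has_real_derivative
      (D 3 0 a 0 * (C - E * D 1 0 a 0) + E * (D 2 0 a 0)\<^sup>2) / (C - E * D 1 0 a 0)\<^sup>2)
      (at a within {0..1})"
    using v_pos[of a t] initial_has_derivative[OF a, of 1] initial_has_derivative[OF a, of 2]
    unfolding v[OF a]
    by (auto intro!: derivative_eq_intros simp: numeral_3_eq_3 numeral_2_eq_2 field_simps power2_eq_square)
  hence d: "((\<lambda>\<beta>. D 2 0 \<beta> 0 / (C - E * D 1 0 \<beta> 0)) has_real_derivative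
      (D 3 0 a 0 * v a t + phi2 t * (D 2 0 a 0)\<^sup>2) / (v a t)\<^sup>2) (at a within {0..1})"
    by (simp only: v[OF a] E_def)
  have "((\<lambda>\<beta>. D 2 0 (\<gamma> \<beta> t) t) has_real_derivative
      (D 3 0 a 0 * v a t + phi2 t * (D 2 0 a 0)\<^sup>2) / (v a t)\<^sup>2) (at a within {0..1})"
  proof (rule has_field_derivative_transform_within[OF d zero_less_one a])
    fix x :: real assume "x \<in> {0..1}"
    thus "D 2 0 x 0 / (C - E * D 1 0 x 0) = D 2 0 (\<gamma> x t) t"
      using uxx_along_flow[OF _ t, of x] v[of x] by simp
  qed
  hence "D 3 0 (\<gamma> a t) t * flow_deriv a t = (D 3 0 a 0 * v a t + phi2 t * (D 2 0 a 0)\<^sup>2) / (v a t)\<^sup>2"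
    by (rule has_field_derivative_unique[OF chain _ at_within_Icc_nontrivial[OF zero_less_one a]])
  moreover have "flow_deriv a t = 1 / v a t" by (simp add: v_def)
  ultimately have eq: "D 3 0 (\<gamma> a t) t * (1 / v a t)
      = (D 3 0 a 0 * v a t + phi2 t * (D 2 0 a 0)\<^sup>2) / (v a t)\<^sup>2" by simp
  have V: "v a t \<noteq> 0" using v_pos[of a t] by simp
  have "D 3 0 (\<gamma> a t) t = D 3 0 (\<gamma> a t) t * (1 / v a t) * v a t" using V by simp
  also have "\<dots> = (D 3 0 a 0 * v a t + phi2 t * (D 2 0 a 0)\<^sup>2) / v a t"
    unfolding eq using V by (simp add: power2_eq_square)
  also have "\<dots> = D 3 0 a 0 + phi2 t * (D 2 0 a 0)\<^sup>2 / v a t"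
    using V by (simp add: add_divide_distrib)
  finally show ?thesis .
qed

lemma v_bounds:
  assumes a: "a \<in> {0..1}" and s: "0 \<le> s" "s \<le> t" and t: "t < T"
    and M: "\<And>x r. x \<in> X \<Longrightarrow> r \<in> {0..t} \<Longrightarrow> \<bar>D 1 0 x r\<bar> \<le> M"
  shows "exp (- M * t) \<le> v a s" and "v a s \<le> exp (M * t)"
proof -
  have "0 \<le> t" using s by linarith
  hence "0 \<le> M" using local_bound_nonneg[of t M] M by blast
  hence "M * s \<le> M * t" using s by (intro mult_left_mono) auto
  moreover have "\<bar>integral {0..s} (ux a)\<bar> \<le> M * s"
    by (rule abs_integral_ux_le[OF a s(1)]) (use s t M in auto)
  ultimately have i: "\<bar>integral {0..s} (ux a)\<bar> \<le> M * t" by linarith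
  have v: "v a s = exp (- integral {0..s} (ux a))"
    by (simp add: v_def flow_deriv_def exp_minus inverse_eq_divide)
  show "exp (- M * t) \<le> v a s" "v a s \<le> exp (M * t)" unfolding v using i by simp_all
qed

definition Kint :: "real \<Rightarrow> real" where
  "Kint e = integral {0..1} (\<lambda>\<beta>. 1 / (1 - e * D 1 0 \<beta> 0))"

definition eta_sol :: "real \<Rightarrow> real" where
  "eta_sol s = phi2 s / phi1 s"

lemma initial_derivative_integral: "((\<lambda>\<beta>. D 1 0 \<beta> 0) has_integral 0) {0..1}"
proof -
  have "((\<lambda>\<beta>. D 1 0 \<beta> 0) has_integral (D 0 0 1 0 - D 0 0 0 0)) {0..1}"
    using initial_has_derivative[of _ 0]
    by (intro fundamental_theorem_of_calculus) (auto simp: has_real_derivative_iff_has_vector_derivative)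
  thus ?thesis using initial_ends by simp
qed

lemma one_minus_eta_sol:
  "\<beta> \<in> {0..1} \<Longrightarrow> s \<in> {0..<T} \<Longrightarrow> 1 - eta_sol s * D 1 0 \<beta> 0 = v \<beta> s / phi1 s"
  using v_eq_phi[of \<beta> s] phi1_pos[of s] by (simp add: eta_sol_def field_simps)

lemma Kint_eta_sol:
  assumes s: "s \<in> {0..<T}"
  shows "Kint (eta_sol s) = phi1 s"
proof -
  have "Kint (eta_sol s) = integral {0..1} (\<lambda>\<beta>. phi1 s * (1 / v \<beta> s))"
    unfolding Kint_def by (rule integral_cong) (use one_minus_eta_sol[OF _ s] phi1_pos[of s] in auto)
  also have "\<dots> = phi1 s * integral {0..1} (\<lambda>\<beta>. 1 / v \<beta> s)" by (rule integral_mult_right)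
  also have "\<dots> = phi1 s" using integral_inverse_v[OF s] by (simp add: has_integral_iff)
  finally show ?thesis .
qed

lemma eta_sol_init: "eta_sol 0 = 0"
  using phi_init by (simp add: eta_sol_def)

text \<open>The Wronskian identity is exactly the ODE for \<open>\<eta>\<close>.\<close>
lemma eta_sol_has_derivative:
  assumes "nondegenerate" and s: "s \<in> {0..<T}"
  shows "(eta_sol has_real_derivative 1 / (Kint (eta_sol s))\<^sup>2) (at s within {0..<T})"
proof -
  have "(eta_sol has_real_derivative (phi2' s * phi1 s - phi2 s * phi1' s) / (phi1 s)\<^sup>2)
      (at s within {0..<T})"
    unfolding eta_sol_def[abs_def] using phi_has_derivative[OF s] phi1_pos[of s]
    by (auto intro!: derivative_eq_intros simp: power2_eq_square field_simps)
  thus ?thesis using wronskian[OF assms] Kint_eta_sol[OF s] by simp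
qed

lemma continuous_eta_sol: "continuous_on {0..<T} eta_sol"
  unfolding eta_sol_def[abs_def] using continuous_phi(1,2) phi1_pos
  by (intro continuous_intros) (auto simp: less_imp_neq[symmetric])

lemma eta_sol_denominator_lower_bound:
  assumes t: "0 \<le> t" "t < T"
  shows "\<exists>c>0. \<forall>s\<in>{0..t}. \<forall>\<beta>\<in>{0..1}. c \<le> 1 - eta_sol s * D 1 0 \<beta> 0"
proof -
  obtain M where M: "\<And>x r. x \<in> X \<Longrightarrow> r \<in> {0..t} \<Longrightarrow> \<bar>D 1 0 x r\<bar> \<le> M"
    using local_bounds[OF t] by blast
  have "exp (- M * t) / exp (M * t) \<le> 1 - eta_sol s * D 1 0 \<beta> 0"
    if s: "s \<in> {0..t}" and \<beta>: "\<beta> \<in> {0..1}" for s \<beta>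
  proof -
    have "exp (- M * t) / exp (M * t) \<le> v \<beta> s / phi1 s"
      using v_bounds[OF \<beta> _ _ t(2) M] v_bounds[OF crit_pt(1) _ _ t(2) M] s phi1_pos[of s]
      by (intro frac_le) (auto simp: phi1_def less_imp_le[OF v_pos])
    thus ?thesis using one_minus_eta_sol[OF \<beta>] s t by auto
  qed
  thus ?thesis by (intro exI[of _ "exp (- M * t) / exp (M * t)"]) auto
qed

lemma Kint_inverse_sq_lipschitz_near_eta_sol:
  assumes t: "0 \<le> t" "t < T"
  shows "\<exists>\<delta>>0. \<exists>L\<ge>0. \<forall>s\<in>{0..t}. \<forall>e. \<bar>e - eta_sol s\<bar> \<le> \<delta> \<longrightarrow>
           \<bar>1 / (Kint e)\<^sup>2 - 1 / (Kint (eta_sol s))\<^sup>2\<bar> \<le> L * \<bar>e - eta_sol s\<bar>"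
proof -
  obtain c where c: "0 < c" and low: "\<And>s \<beta>. s \<in> {0..t} \<Longrightarrow> \<beta> \<in> {0..1} \<Longrightarrow> c \<le> 1 - eta_sol s * D 1 0 \<beta> 0"
    using eta_sol_denominator_lower_bound[OF t] by blast
  obtain M where M: "\<And>\<beta>. \<beta> \<in> {0..1} \<Longrightarrow> \<bar>D 1 0 \<beta> 0\<bar> \<le> M"
    using local_bounds[of 0] unit_subset_X T_pos by fastforce
  have M0: "0 \<le> M" using M[of 0] by auto
  define \<delta> where "\<delta> = c / (2 * (M + 1))"
  have \<delta>: "0 < \<delta>" "\<delta> * M \<le> c / 2"
    using c M0 by (auto simp: \<delta>_def field_simps)
  have near: "c / 2 \<le> 1 - e * D 1 0 \<beta> 0"
    if s: "s \<in> {0..t}" and e: "\<bar>e - eta_sol s\<bar> \<le> \<delta>" and \<beta>: "\<beta> \<in> {0..1}" for s e \<beta>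
  proof -
    have "\<bar>(e - eta_sol s) * D 1 0 \<beta> 0\<bar> \<le> \<delta> * M"
      unfolding abs_mult by (rule mult_mono[OF e M[OF \<beta>]]) (use \<delta> in auto)
    thus ?thesis using low[OF s \<beta>] \<delta>(2) by (auto simp: algebra_simps abs_le_iff)
  qed
  define L where "L = 2 * (2 / c) * (M / (c / 2)\<^sup>2)"
  have "\<bar>1 / (Kint e)\<^sup>2 - 1 / (Kint (eta_sol s))\<^sup>2\<bar> \<le> L * \<bar>e - eta_sol s\<bar>"
    if s: "s \<in> {0..t}" and e: "\<bar>e - eta_sol s\<bar> \<le> \<delta>" for s e
  proof -
    have c2: "0 < c / 2" using c by simp
    note bounds = integral_reciprocal_bounds[OF continuous_initial initial_derivative_integral c2]
    have Je: "\<And>\<beta>. \<beta> \<in> {0..1} \<Longrightarrow> c / 2 \<le> 1 - e * D 1 0 \<beta> 0" using near[OF s e] by blast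
    have J\<eta>: "\<And>\<beta>. \<beta> \<in> {0..1} \<Longrightarrow> c / 2 \<le> 1 - eta_sol s * D 1 0 \<beta> 0" using near[OF s] \<delta> by auto
    have "\<bar>1 / (Kint e)\<^sup>2 - 1 / (Kint (eta_sol s))\<^sup>2\<bar> \<le> 2 * (2 / c) * \<bar>Kint e - Kint (eta_sol s)\<bar>"
      using bounds(2,3)[OF Je] bounds(2,3)[OF J\<eta>] unfolding Kint_def
      by (intro inverse_sq_lipschitz) auto
    also have "\<dots> \<le> 2 * (2 / c) * (M * \<bar>e - eta_sol s\<bar> / (c / 2)\<^sup>2)"
      unfolding Kint_def using c
      by (intro mult_left_mono integral_reciprocal_lipschitz[OF continuous_initial
            initial_derivative_integral M c2 Je J\<eta>]) auto
    also have "\<dots> = L * \<bar>e - eta_sol s\<bar>" by (simp add: L_def)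
    finally show ?thesis .
  qed
  moreover have "0 \<le> L" using c M0 by (simp add: L_def)
  ultimately show ?thesis using \<delta> by blast
qed

lemma eta_unique:
  assumes "nondegenerate" and \<eta>0: "\<eta> 0 = 0"
    and ode: "\<And>s. s \<in> {0..<T} \<Longrightarrow> (\<eta> has_real_derivative 1 / (Kint (\<eta> s))\<^sup>2) (at s within {0..<T})"
    and t: "t \<in> {0..<T}"
  shows "\<eta> t = eta_sol t"
proof -
  have tt: "0 \<le> t" "t < T" using t by auto
  obtain \<delta> L where \<delta>: "0 < \<delta>" and L: "0 \<le> L" and lip: "\<forall>s\<in>{0..t}. \<forall>e. \<bar>e - eta_sol s\<bar> \<le> \<delta> \<longrightarrow>
      \<bar>1 / (Kint e)\<^sup>2 - 1 / (Kint (eta_sol s))\<^sup>2\<bar> \<le> L * \<bar>e - eta_sol s\<bar>"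
    using Kint_inverse_sq_lipschitz_near_eta_sol[OF tt] by blast
  have sub: "{0..t} \<subseteq> {0..<T}" using tt by auto
  show ?thesis
  proof (rule autonomous_ode_unique_near_solution[where f="\<lambda>e. 1 / (Kint e)\<^sup>2", OF tt(1) _ _ _ _ _ \<delta> L])
    show "continuous_on {0..t} \<eta>"
      using continuous_on_subset[OF has_real_derivative_continuous_on[OF ode] sub] .
    show "continuous_on {0..t} eta_sol" using continuous_on_subset[OF continuous_eta_sol sub] .
    fix r assume r: "0 < r" "r < t"
    hence rT: "0 < r" "r < T" "r \<in> {0..<T}" using tt by auto
    show "(\<eta> has_real_derivative 1 / (Kint (\<eta> r))\<^sup>2) (at r)"
      by (rule has_real_derivative_at_of_within_Ico[OF ode[OF rT(3)] rT(1,2)])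
    show "(eta_sol has_real_derivative 1 / (Kint (eta_sol r))\<^sup>2) (at r)"
      by (rule has_real_derivative_at_of_within_Ico[OF eta_sol_has_derivative[OF assms(1) rT(3)] rT(1,2)])
  qed (use \<eta>0 eta_sol_init lip in auto)
qed

lemma Kbar0_eq_Kint: "Kbar0 \<eta> (\<lambda>a. D 1 0 a 0) s = Kint (\<eta> s)"
  by (simp add: Kbar0_def JJ_def Kint_def)

lemma JJ_Kbar0_eq_v:
  assumes \<eta>0: "\<eta> 0 = 0"
    and ode: "\<And>s. s \<in> {0..<T} \<Longrightarrow>
      (\<eta> has_real_derivative 1 / (Kbar0 \<eta> (\<lambda>a. D 1 0 a 0) s)\<^sup>2) (at s within {0..<T})"
    and t: "t \<in> {0..<T}" and \<alpha>: "\<alpha> \<in> {0..1}"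
  shows "JJ \<eta> (\<lambda>a. D 1 0 a 0) \<alpha> t * Kbar0 \<eta> (\<lambda>a. D 1 0 a 0) t = v \<alpha> t"
    and "\<eta> t * (D 2 0 \<alpha> 0)\<^sup>2 / JJ \<eta> (\<lambda>a. D 1 0 a 0) \<alpha> t = phi2 t * (D 2 0 \<alpha> 0)\<^sup>2 / v \<alpha> t"
proof -
  have "JJ \<eta> (\<lambda>a. D 1 0 a 0) \<alpha> t * Kbar0 \<eta> (\<lambda>a. D 1 0 a 0) t = v \<alpha> t
      \<and> \<eta> t * (D 2 0 \<alpha> 0)\<^sup>2 / JJ \<eta> (\<lambda>a. D 1 0 a 0) \<alpha> t = phi2 t * (D 2 0 \<alpha> 0)\<^sup>2 / v \<alpha> t"
  proof (cases nondegenerate)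
    case True
    have "\<eta> t = eta_sol t"
      by (rule eta_unique[where \<eta>=\<eta>, OF True \<eta>0 _ t]) (use ode[unfolded Kbar0_eq_Kint] in blast)
    have K: "Kbar0 \<eta> (\<lambda>a. D 1 0 a 0) t = phi1 t"
      unfolding Kbar0_eq_Kint \<open>\<eta> t = eta_sol t\<close> by (rule Kint_eta_sol[OF t])
    have J: "JJ \<eta> (\<lambda>a. D 1 0 a 0) \<alpha> t = v \<alpha> t / phi1 t"
      using one_minus_eta_sol[OF \<alpha> t] \<open>\<eta> t = eta_sol t\<close> by (simp add: JJ_def)
    show ?thesis unfolding K J \<open>\<eta> t = eta_sol t\<close> eta_sol_def
      using phi1_pos[of t] v_pos[of \<alpha> t] by (simp add: field_simps)
  next
    case False
    have u0': "\<And>\<beta>. \<beta> \<in> {0..1} \<Longrightarrow> D 1 0 \<beta> 0 = 0" using degenerate_initial[OF False] .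
    have v: "\<And>\<beta>. \<beta> \<in> {0..1} \<Longrightarrow> v \<beta> t = phi1 t" using v_eq_phi[OF _ t] u0' by simp
    have "integral {0..1} (\<lambda>\<beta>::real. 1 / phi1 t) = integral {0..1} (\<lambda>\<beta>. 1 / v \<beta> t)"
      by (rule integral_cong) (use v in auto)
    hence "phi1 t = 1" using integral_inverse_v[OF t] by (simp add: has_integral_iff)
    moreover have "Kbar0 \<eta> (\<lambda>a. D 1 0 a 0) t = integral {0..1} (\<lambda>\<beta>::real. 1)"
      unfolding Kbar0_def JJ_def by (rule integral_cong) (use u0' in auto)
    ultimately show ?thesis
      using u0'[OF \<alpha>] v[OF \<alpha>] degenerate_initial_D20[OF False \<alpha>] by (simp add: JJ_def)
  qed
  thus "JJ \<eta> (\<lambda>a. D 1 0 a 0) \<alpha> t * Kbar0 \<eta> (\<lambda>a. D 1 0 a 0) t = v \<alpha> t"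
    and "\<eta> t * (D 2 0 \<alpha> 0)\<^sup>2 / JJ \<eta> (\<lambda>a. D 1 0 a 0) \<alpha> t = phi2 t * (D 2 0 \<alpha> 0)\<^sup>2 / v \<alpha> t"
    by auto
qed

lemma derivatives_along_flow:
  assumes \<eta>0: "\<eta> 0 = 0"
    and ode: "\<And>s. s \<in> {0..<T} \<Longrightarrow>
      (\<eta> has_real_derivative 1 / (Kbar0 \<eta> (\<lambda>a. D 1 0 a 0) s)\<^sup>2) (at s within {0..<T})"
    and t: "t \<in> {0..<T}" and \<alpha>: "\<alpha> \<in> {0..1}"
  defines "J \<equiv> JJ \<eta> (\<lambda>a. D 1 0 a 0) \<alpha> t" and "K \<equiv> Kbar0 \<eta> (\<lambda>a. D 1 0 a 0) t"
  shows "((\<lambda>a. \<gamma> a t) has_real_derivative (1 / J) * (1 / K)) (at \<alpha> within {0..1})"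
    and "D 2 0 (\<gamma> \<alpha> t) t = D 2 0 \<alpha> 0 * ((1 / J) * (1 / K))"
    and "D 3 0 (\<gamma> \<alpha> t) t = D 3 0 \<alpha> 0 + \<eta> t * (D 2 0 \<alpha> 0)\<^sup>2 / J"
    and "sgn (D 2 0 (\<gamma> \<alpha> t) t) = sgn (D 2 0 \<alpha> 0)"
proof -
  note JK = JJ_Kbar0_eq_v[OF \<eta>0 ode t \<alpha>, folded J_def K_def]
  have flow_deriv: "flow_deriv \<alpha> t = (1 / J) * (1 / K)" using JK(1) by (simp add: v_def)
  show "((\<lambda>a. \<gamma> a t) has_real_derivative (1 / J) * (1 / K)) (at \<alpha> within {0..1})"
    using flow_has_derivative_initial[OF \<alpha> t] unfolding flow_deriv .
  show "D 2 0 (\<gamma> \<alpha> t) t = D 2 0 \<alpha> 0 * ((1 / J) * (1 / K))"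
    using uxx_along_flow[OF \<alpha> t] flow_deriv by (simp add: v_def)
  show "D 3 0 (\<gamma> \<alpha> t) t = D 3 0 \<alpha> 0 + \<eta> t * (D 2 0 \<alpha> 0)\<^sup>2 / J"
    using uxxx_along_flow[OF \<alpha> t] JK(2) by simp
  show "sgn (D 2 0 (\<gamma> \<alpha> t) t) = sgn (D 2 0 \<alpha> 0)"
    using uxx_along_flow[OF \<alpha> t] v_pos[of \<alpha> t] by (simp add: sgn_divide)
qed

end

lemma periodic_derivatives:
  assumes sf: "smooth_family (UNIV \<times> {0..<T}) D"
    and per: "\<forall>x. \<forall>t\<in>{0..<T}. D 0 0 (x + 1) t = D 0 0 x t"
  shows "s \<in> {0..<T} \<Longrightarrow> D i j (x + 1) s = D i j x s"
proof (induction j arbitrary: i x s)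
  case 0
  then show ?case
  proof (induction i arbitrary: x)
    case 0 thus ?case using per by auto
  next
    case (Suc i)
    have "((\<lambda>z. D i 0 z s) has_real_derivative D (Suc i) 0 x s * 1 + D i (Suc 0) x s * 0) (at x)"
      by (rule smooth_family_chain[OF sf, of UNIV "\<lambda>z. z" "\<lambda>z. s", simplified])
        (use Suc.prems in \<open>auto intro!: derivative_eq_intros\<close>)
    moreover have "((\<lambda>z. D i 0 (z + 1) s) has_real_derivative
        D (Suc i) 0 (x + 1) s * 1 + D i (Suc 0) (x + 1) s * 0) (at x)"
      by (rule smooth_family_chain[OF sf, of UNIV "\<lambda>z. z + 1" "\<lambda>z. s", simplified])
        (use Suc.prems in \<open>auto intro!: derivative_eq_intros\<close>)
    moreover have "(\<lambda>z. D i 0 (z + 1) s) = (\<lambda>z. D i 0 z s)" using Suc.IH Suc.prems by auto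
    ultimately show ?case using DERIV_unique by fastforce
  qed
next
  case (Suc j)
  have d: "((\<lambda>r. D i j y r) has_real_derivative D i (Suc j) y s) (at s within {0..<T})" for y
    using smooth_family_chain[OF sf, of "{0..<T}" "\<lambda>r. y" "\<lambda>r. r" s 0 1 i j] Suc.prems
    by (auto intro!: derivative_eq_intros)
  have "((\<lambda>r. D i j x r) has_real_derivative D i (Suc j) (x + 1) s) (at s within {0..<T})"
    by (rule has_field_derivative_transform_within[OF d zero_less_one Suc.prems]) (use Suc.IH in auto)
  thus ?case using has_field_derivative_unique[OF d] at_within_Ico_nontrivial[OF Suc.prems] by auto
qed

lemma periodic_reduce_to_unit:
  assumes sf: "smooth_family (UNIV \<times> {0..<T}) D"
    and per: "\<forall>x. \<forall>t\<in>{0..<T}. D 0 0 (x + 1) t = D 0 0 x t"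
  shows "\<exists>y\<in>{0..1}. \<forall>i j s. s \<in> {0..<T} \<longrightarrow> D i j x s = D i j y s"
proof -
  have shift: "D i j (y + of_int k) s = D i j y s" if s: "s \<in> {0..<T}" for y i j s and k :: int
  proof (induction k rule: int_induct[where k=0])
    case (step1 k)
    thus ?case using periodic_derivatives[OF sf per s, of i j "y + of_int k"] by (simp add: add.assoc)
  next
    case (step2 k)
    thus ?case using periodic_derivatives[OF sf per s, of i j "y + of_int (k - 1)"] by (simp add: algebra_simps)
  qed simp
  define y where "y = x - of_int \<lfloor>x\<rfloor>"
  have "of_int \<lfloor>x\<rfloor> \<le> x" "x < of_int \<lfloor>x\<rfloor> + 1"
    by (rule of_int_floor_le) (rule real_of_int_floor_add_one_gt)
  hence "y \<in> {0..1}" unfolding y_def atLeastAtMost_iff by linarith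
  moreover have "D i j x s = D i j y s" if "s \<in> {0..<T}" for i j s
    using shift[OF that, where y=y and k="\<lfloor>x\<rfloor>"] by (simp add: y_def)
  ultimately show ?thesis by blast
qed

lemma periodic_lagrangian_flow:
  assumes sf: "smooth_family (UNIV \<times> {0..<T}) D"
    and per: "\<forall>x. \<forall>t\<in>{0..<T}. D 0 0 (x + 1) t = D 0 0 x t"
    and pde: "\<forall>x\<in>{0..1}. \<forall>t\<in>{0<..<T}.
       D 1 1 x t + D 0 0 x t * D 2 0 x t - (D 1 0 x t)\<^sup>2 = - 2 * integral {0..1} (\<lambda>y. (D 1 0 y t)\<^sup>2)"
    and flow: "\<forall>\<alpha>\<in>{0..1}. \<gamma> \<alpha> 0 = \<alpha> \<and>
       (\<forall>t\<in>{0..<T}. ((\<gamma> \<alpha>) has_real_derivative D 0 0 (\<gamma> \<alpha> t) t) (at t within {0..<T}))"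
  shows "lagrangian_flow D \<gamma> UNIV T"
proof
  note reduce = periodic_reduce_to_unit[OF sf per]
  fix x s :: real assume s: "s \<in> {0<..<T}"
  then obtain y where "y \<in> {0..1}" "\<forall>i j. D i j x s = D i j y s" using reduce[of x] by auto
  thus "D 1 1 x s + D 0 0 x s * D 2 0 x s - (D 1 0 x s)\<^sup>2 = - 2 * integral {0..1} (\<lambda>y. (D 1 0 y s)\<^sup>2)"
    using pde s by auto
next
  note reduce = periodic_reduce_to_unit[OF sf per]
  fix b :: real assume b: "0 \<le> b" "b < T"
  then obtain M where M: "\<forall>x\<in>{0..1}. \<forall>s\<in>{0..b}. \<bar>D 1 0 x s\<bar> \<le> M \<and> \<bar>D 2 0 x s\<bar> \<le> M"
    using smooth_family_bounded_unit_strip[OF sf] by blast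
  have "\<bar>D 1 0 x s\<bar> \<le> M \<and> \<bar>D 2 0 x s\<bar> \<le> M" if "s \<in> {0..b}" for x s
  proof -
    have "s \<in> {0..<T}" using that b by auto
    then obtain y where "y \<in> {0..1}" "\<forall>i j. D i j x s = D i j y s" using reduce[of x] by blast
    thus ?thesis using M that by auto
  qed
  thus "\<exists>M. \<forall>x\<in>UNIV. \<forall>s\<in>{0..b}. \<bar>D 1 0 x s\<bar> \<le> M \<and> \<bar>D 2 0 x s\<bar> \<le> M" by blast
qed (use sf flow in auto)

lemma periodic_lagrangian_flow_bc:
  assumes sf: "smooth_family (UNIV \<times> {0..<T}) D"
    and per: "\<forall>x. \<forall>t\<in>{0..<T}. D 0 0 (x + 1) t = D 0 0 x t"
    and pde: "\<forall>x\<in>{0..1}. \<forall>t\<in>{0<..<T}.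
       D 1 1 x t + D 0 0 x t * D 2 0 x t - (D 1 0 x t)\<^sup>2 = - 2 * integral {0..1} (\<lambda>y. (D 1 0 y t)\<^sup>2)"
    and flow: "\<forall>\<alpha>\<in>{0..1}. \<gamma> \<alpha> 0 = \<alpha> \<and>
       (\<forall>t\<in>{0..<T}. ((\<gamma> \<alpha>) has_real_derivative D 0 0 (\<gamma> \<alpha> t) t) (at t within {0..<T}))"
    and T: "0 < T"
  shows "lagrangian_flow_bc D \<gamma> UNIV T"
proof -
  note lf = periodic_lagrangian_flow[OF sf per pde flow]
  interpret lagrangian_flow D \<gamma> UNIV T by (rule lf)
  show ?thesis
  proof (intro lagrangian_flow_bc.intro lf lagrangian_flow_bc_axioms.intro T)
    fix s assume s: "s \<in> {0..<T}"
    text \<open>The translate \<open>\<gamma>(0,\<cdot>) + 1\<close> is again a trajectory, by periodicity of \<open>u\<close>.\<close>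
    have "\<gamma> 0 s + 1 = \<gamma> 1 s"
    proof (rule flow_unique[where c="\<lambda>s. \<gamma> 0 s + 1"])
      fix r assume r: "r \<in> {0..<T}"
      have "((\<lambda>s. \<gamma> 0 s + 1) has_real_derivative D 0 0 (\<gamma> 0 r) r + 0) (at r within {0..<T})"
        by (intro derivative_intros flow_ode) (use r in auto)
      thus "((\<lambda>s. \<gamma> 0 s + 1) has_real_derivative D 0 0 (\<gamma> 0 r + 1) r) (at r within {0..<T})"
        using per r by simp
    qed (use s flow_init[of 0] in auto)
    thus "\<gamma> 1 s - \<gamma> 0 s = 1" by simp
  next
    show "D 0 0 0 0 = D 0 0 1 0" using per T by (metis add_0 atLeastLessThan_iff order_refl)
  qed
qed

lemma dirichlet_lagrangian_flow_bc:
  assumes sf: "smooth_family ({0..1} \<times> {0..<T}) D"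
    and bd: "\<forall>t\<in>{0..<T}. D 0 0 0 t = 0 \<and> D 0 0 1 t = 0"
    and inside: "\<forall>\<alpha>\<in>{0..1}. \<forall>t\<in>{0..<T}. \<gamma> \<alpha> t \<in> {0..1}"
    and pde: "\<forall>x\<in>{0..1}. \<forall>t\<in>{0<..<T}.
       D 1 1 x t + D 0 0 x t * D 2 0 x t - (D 1 0 x t)\<^sup>2 = - 2 * integral {0..1} (\<lambda>y. (D 1 0 y t)\<^sup>2)"
    and flow: "\<forall>\<alpha>\<in>{0..1}. \<gamma> \<alpha> 0 = \<alpha> \<and>
       (\<forall>t\<in>{0..<T}. ((\<gamma> \<alpha>) has_real_derivative D 0 0 (\<gamma> \<alpha> t) t) (at t within {0..<T}))"
    and T: "0 < T"
  shows "lagrangian_flow_bc D \<gamma> {0..1} T"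
proof -
  have lf: "lagrangian_flow D \<gamma> {0..1} T"
  proof
    fix b :: real assume "0 \<le> b" "b < T"
    thus "\<exists>M. \<forall>x\<in>{0..1}. \<forall>s\<in>{0..b}. \<bar>D 1 0 x s\<bar> \<le> M \<and> \<bar>D 2 0 x s\<bar> \<le> M"
      using smooth_family_bounded_unit_strip[OF sf] by blast
  qed (use sf pde flow inside in auto)
  then interpret lagrangian_flow D \<gamma> "{0..1}" T .
  text \<open>The endpoints are stationary, as \<open>u\<close> vanishes there.\<close>
  have fixed: "\<gamma> c s = c" if "c \<in> {0, 1}" "s \<in> {0..<T}" for c s
    by (rule flow_unique[where c="\<lambda>s. c", symmetric]) (use that bd in auto)
  show ?thesis
    by (intro lagrangian_flow_bc.intro lf lagrangian_flow_bc_axioms.intro T) (use fixed bd T in auto)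
qed

theorem mainTheorem4:
  fixes D :: "nat \<Rightarrow> nat \<Rightarrow> real \<Rightarrow> real \<Rightarrow> real"
    and \<gamma> :: "real \<Rightarrow> real \<Rightarrow> real"
    and \<eta> :: "real \<Rightarrow> real"
    and T :: real
  defines "u0' \<equiv> (\<lambda>\<alpha>. D 1 0 \<alpha> 0)"
  assumes bc:
    "(smooth_family (UNIV \<times> {0..<T}) D
       \<and> (\<forall>x. \<forall>t\<in>{0..<T}. D 0 0 (x + 1) t = D 0 0 x t))
     \<or> (smooth_family ({0..1} \<times> {0..<T}) D
       \<and> (\<forall>t\<in>{0..<T}. D 0 0 0 t = 0 \<and> D 0 0 1 t = 0)
       \<and> (\<forall>\<alpha>\<in>{0..1}. \<forall>t\<in>{0..<T}. \<gamma> \<alpha> t \<in> {0..1}))"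
    and pde: "\<forall>x\<in>{0..1}. \<forall>t\<in>{0<..<T}.
       D 1 1 x t + D 0 0 x t * D 2 0 x t - (D 1 0 x t)\<^sup>2
         = - 2 * integral {0..1} (\<lambda>y. (D 1 0 y t)\<^sup>2)"
    and flow: "\<forall>\<alpha>\<in>{0..1}. \<gamma> \<alpha> 0 = \<alpha> \<and>
       (\<forall>t\<in>{0..<T}. ((\<gamma> \<alpha>) has_real_derivative D 0 0 (\<gamma> \<alpha> t) t) (at t within {0..<T}))"
    and eta0: "\<eta> 0 = 0"
    and eta_ode: "\<forall>t\<in>{0..<T}.
       (\<eta> has_real_derivative 1 / (Kbar0 \<eta> u0' t)\<^sup>2) (at t within {0..<T})"
    and t: "t \<in> {0..<T}" and \<alpha>: "\<alpha> \<in> {0..1}"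
  shows "((\<lambda>a. \<gamma> a t) has_real_derivative
            (1 / JJ \<eta> u0' \<alpha> t) * (1 / Kbar0 \<eta> u0' t)) (at \<alpha> within {0..1})
       \<and> D 2 0 (\<gamma> \<alpha> t) t = D 2 0 \<alpha> 0 * ((1 / JJ \<eta> u0' \<alpha> t) * (1 / Kbar0 \<eta> u0' t))
       \<and> D 3 0 (\<gamma> \<alpha> t) t = D 3 0 \<alpha> 0 + \<eta> t * (D 2 0 \<alpha> 0)\<^sup>2 / JJ \<eta> u0' \<alpha> t
       \<and> sgn (D 2 0 (\<gamma> \<alpha> t) t) = sgn (D 2 0 \<alpha> 0)"
proof -
  have T: "0 < T" using t by auto
  obtain X where "lagrangian_flow_bc D \<gamma> X T"
    using bc periodic_lagrangian_flow_bc[OF _ _ pde flow T] dirichlet_lagrangian_flow_bc[OF _ _ _ pde flow T]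
    by blast
  then interpret lagrangian_flow_bc D \<gamma> X T .
  have ode: "\<And>s. s \<in> {0..<T} \<Longrightarrow>
      (\<eta> has_real_derivative 1 / (Kbar0 \<eta> (\<lambda>a. D 1 0 a 0) s)\<^sup>2) (at s within {0..<T})"
    using eta_ode unfolding u0'_def by blast
  show ?thesis
    using derivatives_along_flow[where \<eta>=\<eta>, OF eta0 ode t \<alpha>] unfolding u0'_def by blast
qed

end
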